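(* Let $K$ be a field and $m,n,r$ positive integers. Let $R=K[x_{ij}^k \mid 1\le i\le m,\ 1\le j\le n,\ 1\le k\le r]$ and let $I_{mn}^r$ be the ideal generated by all $2$-minors of the horizontal concatenation $H=(X_1\ \cdots\ X_r)$ and all $2$-minors of the vertical concatenation $V$ of the $m\times n$ matrices $X_k=(x_{ij}^k)$. Fix a diagonal term order, and let $\Delta$ be the simplicial complex on the vertex set $\mathcal P=\{(i,j):1\le i\le m,\ 1\le j\le nr\}$ whose Stanley–Reisner ideal is $\operatorname{in}(I_{mn}^r)$, where the variable $x_{ij}^k$ is identified with the vertex $(i,(k-1)n+j)$. Then a subset $F\subseteq\mathcal P$ is a facet of $\Delta$ if and only if there exist integers $m=g_0\ge g_1\ge\cdots\ge g_{r-1}\ge g_r=1$ and $n=h_0\ge h_1\ge\cdots\ge h_{r-1}\ge h_r=1$ such that $F$ is the union of $r$ paths $$(g_{k-1},(k-1)n+h_k)\longrightarrow (g_k,(k-1)n+h_{k-1}),\qquad 1\le k\le r.$$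
   Context: A term order is diagonal if the leading term of every $2$-minor of $H$ and of $V$ is the product of the entries on its main diagonal. A path from $(g_1,h_1)$ to $(g_t,h_t)$, written $(g_1,h_1)\longrightarrow(g_t,h_t)$, is a subset $\{(g_1,h_1),\dots,(g_t,h_t)\}\subseteq\mathcal P$ with $(g_{s+1},h_{s+1})-(g_s,h_s)\in\{(-1,0),(0,1)\}$ for all $s=1,\dots,t-1$; a single point $(g,h)$ is regarded as the path $(g,h)\longrightarrow(g,h)$. *)

theory Defs
  imports Main "HOL-Library.Poly_Mapping"
begin

text \<open>Vertices / variables are pairs (i, c) of natural numbers; the variable
x_{ij}^k of the paper is identified with the variable indexed by the vertex
(i, (k-1)n + j).\<close>

type_synonym vtx = "nat \<times> nat"
type_synonym mon = "vtx \<Rightarrow>\<^sub>0 nat"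
type_synonym 'k mpoly = "mon \<Rightarrow>\<^sub>0 'k"

definition vertex_set :: "nat \<Rightarrow> nat \<Rightarrow> nat \<Rightarrow> vtx set" where
  "vertex_set m n r = {(i, c). 1 \<le> i \<and> i \<le> m \<and> 1 \<le> c \<and> c \<le> n * r}"

definition var :: "vtx \<Rightarrow> 'k::comm_ring_1 mpoly" where
  "var v = Poly_Mapping.single (Poly_Mapping.single v 1) 1"

definition mons_in :: "vtx set \<Rightarrow> mon set" where
  "mons_in V = {a. Poly_Mapping.keys a \<subseteq> V}"

definition poly_ring :: "vtx set \<Rightarrow> 'k::comm_ring_1 mpoly set" where
  "poly_ring V = {p. Poly_Mapping.keys p \<subseteq> mons_in V}"

inductive_set gen_ideal :: "vtx set \<Rightarrow> 'k::comm_ring_1 mpoly set \<Rightarrow> 'k mpoly set"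
  for V G where
  zero: "0 \<in> gen_ideal V G"
| step: "\<lbrakk> p \<in> gen_ideal V G; g \<in> G; q \<in> poly_ring V \<rbrakk> \<Longrightarrow> q * g + p \<in> gen_ideal V G"

definition term_order :: "vtx set \<Rightarrow> (mon \<Rightarrow> mon \<Rightarrow> bool) \<Rightarrow> bool" where
  "term_order V tle \<longleftrightarrow>
     (\<forall>a\<in>mons_in V. tle a a) \<and>
     (\<forall>a\<in>mons_in V. \<forall>b\<in>mons_in V. tle a b \<and> tle b a \<longrightarrow> a = b) \<and>
     (\<forall>a\<in>mons_in V. \<forall>b\<in>mons_in V. \<forall>c\<in>mons_in V. tle a b \<and> tle b c \<longrightarrow> tle a c) \<and>
     (\<forall>a\<in>mons_in V. \<forall>b\<in>mons_in V. tle a b \<or> tle b a) \<and>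
     (\<forall>a\<in>mons_in V. tle 0 a) \<and>
     (\<forall>a\<in>mons_in V. \<forall>b\<in>mons_in V. \<forall>c\<in>mons_in V. tle a b \<longrightarrow> tle (a + c) (b + c))"

definition lead_mon :: "(mon \<Rightarrow> mon \<Rightarrow> bool) \<Rightarrow> 'k::comm_ring_1 mpoly \<Rightarrow> mon" where
  "lead_mon tle p = (THE a. a \<in> Poly_Mapping.keys p \<and> (\<forall>b\<in>Poly_Mapping.keys p. tle b a))"

definition initial_ideal ::
  "vtx set \<Rightarrow> (mon \<Rightarrow> mon \<Rightarrow> bool) \<Rightarrow> 'k::comm_ring_1 mpoly set \<Rightarrow> 'k mpoly set" where
  "initial_ideal V tle I =
     gen_ideal V {Poly_Mapping.single (lead_mon tle f) 1 | f. f \<in> I \<and> f \<noteq> 0}"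

definition minor2 :: "(nat \<Rightarrow> nat \<Rightarrow> vtx) \<Rightarrow> nat \<Rightarrow> nat \<Rightarrow> nat \<Rightarrow> nat \<Rightarrow> 'k::comm_ring_1 mpoly" where
  "minor2 M a b c d = var (M a c) * var (M b d) - var (M a d) * var (M b c)"

text \<open>Horizontal concatenation H = (X_1 ... X_r), an m x nr matrix, and
vertical concatenation V, an mr x n matrix; entries are variable indices.\<close>
definition Hmat :: "nat \<Rightarrow> nat \<Rightarrow> nat \<Rightarrow> vtx" where
  "Hmat n i c = (i, c)"

definition Vmat :: "nat \<Rightarrow> nat \<Rightarrow> nat \<Rightarrow> nat \<Rightarrow> vtx" where
  "Vmat m n R j = (let k = (R - 1) div m + 1; i = (R - 1) mod m + 1 in (i, (k - 1) * n + j))"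

definition minor_idx :: "nat \<Rightarrow> nat \<Rightarrow> (nat \<times> nat \<times> nat \<times> nat) set" where
  "minor_idx p q = {(a, b, c, d). 1 \<le> a \<and> a < b \<and> b \<le> p \<and> 1 \<le> c \<and> c < d \<and> d \<le> q}"

definition minors_HV :: "nat \<Rightarrow> nat \<Rightarrow> nat \<Rightarrow> 'k::comm_ring_1 mpoly set" where
  "minors_HV m n r =
     {minor2 (Hmat n) a b c d | a b c d. (a, b, c, d) \<in> minor_idx m (n * r)} \<union>
     {minor2 (Vmat m n) a b c d | a b c d. (a, b, c, d) \<in> minor_idx (m * r) n}"

definition I_mnr :: "nat \<Rightarrow> nat \<Rightarrow> nat \<Rightarrow> 'k::comm_ring_1 mpoly set" where
  "I_mnr m n r = gen_ideal (vertex_set m n r) (minors_HV m n r)"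

definition diagonal_order ::
  "'k::comm_ring_1 itself \<Rightarrow> nat \<Rightarrow> nat \<Rightarrow> nat \<Rightarrow> (mon \<Rightarrow> mon \<Rightarrow> bool) \<Rightarrow> bool" where
  "diagonal_order (_ :: 'k itself) m n r tle \<longleftrightarrow>
     (\<forall>(a, b, c, d) \<in> minor_idx m (n * r).
        lead_mon tle (minor2 (Hmat n) a b c d :: 'k mpoly)
          = Poly_Mapping.single (Hmat n a c) 1 + Poly_Mapping.single (Hmat n b d) 1) \<and>
     (\<forall>(a, b, c, d) \<in> minor_idx (m * r) n.
        lead_mon tle (minor2 (Vmat m n) a b c d :: 'k mpoly)
          = Poly_Mapping.single (Vmat m n a c) 1 + Poly_Mapping.single (Vmat m n b d) 1)"

definition sqfree_mon :: "vtx set \<Rightarrow> 'k::comm_ring_1 mpoly" where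
  "sqfree_mon F = Poly_Mapping.single (\<Sum>v\<in>F. Poly_Mapping.single v 1) 1"

definition simplicial_complex :: "vtx set \<Rightarrow> vtx set set \<Rightarrow> bool" where
  "simplicial_complex P \<Delta> \<longleftrightarrow> {} \<in> \<Delta> \<and> (\<forall>F\<in>\<Delta>. F \<subseteq> P \<and> (\<forall>G. G \<subseteq> F \<longrightarrow> G \<in> \<Delta>))"

definition SR_ideal :: "vtx set \<Rightarrow> vtx set set \<Rightarrow> 'k::comm_ring_1 mpoly set" where
  "SR_ideal P \<Delta> = gen_ideal P {sqfree_mon F | F. F \<subseteq> P \<and> F \<notin> \<Delta>}"

definition facet :: "vtx set set \<Rightarrow> vtx set \<Rightarrow> bool" where
  "facet \<Delta> F \<longleftrightarrow> F \<in> \<Delta> \<and> (\<forall>G\<in>\<Delta>. F \<subseteq> G \<longrightarrow> G = F)"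

definition is_path :: "vtx set \<Rightarrow> vtx \<Rightarrow> vtx \<Rightarrow> vtx set \<Rightarrow> bool" where
  "is_path P a b S \<longleftrightarrow> (\<exists>ps. ps \<noteq> [] \<and> hd ps = a \<and> last ps = b \<and> set ps = S \<and> S \<subseteq> P \<and>
     (\<forall>s. s + 1 < length ps \<longrightarrow>
        (fst (ps ! (s + 1)) + 1 = fst (ps ! s) \<and> snd (ps ! (s + 1)) = snd (ps ! s)) \<or>
        (fst (ps ! (s + 1)) = fst (ps ! s) \<and> snd (ps ! (s + 1)) = snd (ps ! s) + 1)))"

end

theory Submission
  imports Defs "HOL-Library.Multiset"
begin

text \<open>Call \<open>p, q\<close> a diagonal pair if \<open>x\<^sub>p x\<^sub>q\<close> is the main diagonal, hence the leading term, of a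
  2-minor of \<open>H\<close> or of \<open>V\<close>. Grade the monomials by the multisets of the row indices, of the
  column indices inside the blocks and of the block indices of their variables. The minors are
  homogeneous binomials, so every element of \<open>I\<^sub>m\<^sub>n\<^sup>r\<close> contains, besides its leading monomial,
  another monomial of the same degree. On the other hand a monomial without diagonal pairs is
  the only one of its degree, since its variables form staircases that are determined by the
  three marginals, and every other monomial can be lowered inside its degree by replacing a
  diagonal by the corresponding antidiagonal. Hence diagonal-free monomials are the minima of
  their degrees and never leading monomials: \<open>\<Delta>\<close> is the complex of diagonal-free sets.

  A set is diagonal-free iff inside each block no point lies strictly south-east of another
  and the points of later blocks lie weakly north-west of those of earlier blocks. So the
  points of each block lie in a box cut out by the points of the earlier blocks, and a maximal
  diagonal-free set fills every box by a lattice path from its south-west to its north-east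
  corner; conversely every point off these paths forms a diagonal pair with a point on them.\<close>

abbreviation lookup :: "('a \<Rightarrow>\<^sub>0 'b::zero) \<Rightarrow> 'a \<Rightarrow> 'b" where
  "lookup \<equiv> Poly_Mapping.lookup"
abbreviation keys :: "('a \<Rightarrow>\<^sub>0 'b::zero) \<Rightarrow> 'a set" where
  "keys \<equiv> Poly_Mapping.keys"
abbreviation single :: "'a \<Rightarrow> 'b::zero \<Rightarrow> 'a \<Rightarrow>\<^sub>0 'b" where
  "single \<equiv> Poly_Mapping.single"

abbreviation vmon :: "vtx \<Rightarrow> mon" where
  "vmon v \<equiv> single v 1"

lemma mons_in_add: "a \<in> mons_in V \<Longrightarrow> b \<in> mons_in V \<Longrightarrow> a + b \<in> mons_in V"
  unfolding mons_in_def using keys_add[of a b] by auto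

lemma mons_in_single: "v \<in> V \<Longrightarrow> single v k \<in> mons_in V"
  unfolding mons_in_def by simp

lemma mons_in_sum_vmon: "F \<subseteq> V \<Longrightarrow> (\<Sum>v\<in>F. vmon v) \<in> mons_in V"
  unfolding mons_in_def using keys_sum[of vmon F] by auto

lemma poly_ring_add: "p \<in> poly_ring V \<Longrightarrow> q \<in> poly_ring V \<Longrightarrow> p + q \<in> poly_ring V"
  unfolding poly_ring_def using keys_add[of p q] by auto

lemma poly_ring_diff:
  "p \<in> poly_ring V \<Longrightarrow> q \<in> poly_ring V \<Longrightarrow> (p - q :: 'k::comm_ring_1 mpoly) \<in> poly_ring V"
  unfolding poly_ring_def using keys_diff[of p q] by auto

lemma poly_ring_mult:
  "p \<in> poly_ring V \<Longrightarrow> q \<in> poly_ring V \<Longrightarrow> (p * q :: 'k::comm_ring_1 mpoly) \<in> poly_ring V"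
  unfolding poly_ring_def using keys_mult[of p q] mons_in_add by fastforce

lemma poly_ring_single: "a \<in> mons_in V \<Longrightarrow> single a c \<in> poly_ring V"
  unfolding poly_ring_def by simp

lemma poly_ring_one: "(1 :: 'k::comm_ring_1 mpoly) \<in> poly_ring V"
  unfolding poly_ring_def mons_in_def by simp

lemma gen_ideal_subset_poly_ring:
  assumes "G \<subseteq> poly_ring V"
  shows "gen_ideal V G \<subseteq> (poly_ring V :: 'k::comm_ring_1 mpoly set)"
proof
  fix p :: "'k mpoly" assume "p \<in> gen_ideal V G"
  then show "p \<in> poly_ring V"
  proof induct
    case zero
    then show ?case by (simp add: poly_ring_def)
  next
    case (step p g q)
    then show ?case using assms by (meson poly_ring_add poly_ring_mult subsetD)
  qed
qed

lemma gen_ideal_generator: "g \<in> G \<Longrightarrow> (g :: 'k::comm_ring_1 mpoly) \<in> gen_ideal V G"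
  using gen_ideal.step[OF gen_ideal.zero _ poly_ring_one, of g G] by simp

lemma gen_ideal_mult_left:
  assumes "p \<in> gen_ideal V G" "q \<in> poly_ring V"
  shows "q * p \<in> gen_ideal V (G :: 'k::comm_ring_1 mpoly set)"
  using assms(1)
proof induct
  case zero
  then show ?case by (simp add: gen_ideal.zero)
next
  case (step p g q')
  have "q * (q' * g + p) = (q * q') * g + q * p"
    by (simp add: algebra_simps)
  then show ?case
    using step gen_ideal.step[of "q * p" V G g "q * q'"] poly_ring_mult[OF assms(2) step(4)] by simp
qed

lemma keys_monomial_ideal:
  assumes "p \<in> gen_ideal V G" "\<forall>g\<in>G. \<exists>a\<in>A. g = single a (1::'k::comm_ring_1)" "b \<in> keys p"
  shows "\<exists>a\<in>A. \<exists>c. b = c + a"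
  using assms(1,3)
proof (induct arbitrary: b)
  case zero
  then show ?case by simp
next
  case (step p g q)
  then obtain a where a: "a \<in> A" "g = single a 1"
    using assms(2) by blast
  from step(5) keys_add[of "q * g" p] have "b \<in> keys (q * g) \<or> b \<in> keys p" by auto
  then show ?case
  proof
    assume "b \<in> keys (q * g)"
    then obtain w where "b = w + a" using keys_mult[of q g] a by auto
    then show ?thesis using a by blast
  next
    assume "b \<in> keys p"
    then show ?thesis using step(2) by simp
  qed
qed

lemma keys_sum_vmon: "finite F \<Longrightarrow> keys (\<Sum>v\<in>F. vmon v) = F"
  by (rule set_eqI) (simp add: in_keys_iff lookup_sum lookup_single when_def)

lemma sqfree_mon_in_monomial_ideal:
  assumes "finite F" "(sqfree_mon F :: 'k::comm_ring_1 mpoly) \<in> gen_ideal V G"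
    and "\<forall>g\<in>G. \<exists>a\<in>A. g = single a 1"
  shows "\<exists>a\<in>A. keys a \<subseteq> F"
proof -
  have "(\<Sum>v\<in>F. vmon v) \<in> keys (sqfree_mon F :: 'k mpoly)"
    by (simp add: sqfree_mon_def)
  then obtain a c where a: "a \<in> A" "(\<Sum>v\<in>F. vmon v) = c + a"
    using keys_monomial_ideal[OF assms(2,3)] by blast
  have "keys a \<subseteq> keys (\<Sum>v\<in>F. vmon v)"
    unfolding a(2) by (auto simp: in_keys_iff lookup_add)
  then show ?thesis using a(1) keys_sum_vmon[OF assms(1)] by auto
qed

lemma finite_has_greatest_wrt:
  assumes "finite S" "S \<noteq> {}"
    and "\<forall>a\<in>S. \<forall>b\<in>S. R a b \<or> R b a"
    and "\<forall>a\<in>S. \<forall>b\<in>S. \<forall>c\<in>S. R a b \<longrightarrow> R b c \<longrightarrow> R a c"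
  shows "\<exists>w\<in>S. \<forall>x\<in>S. R x w"
  using assms
proof (induct S rule: finite_ne_induct)
  case (singleton x)
  then show ?case by blast
next
  case (insert x F)
  then obtain w where w: "w \<in> F" "\<forall>y\<in>F. R y w" by blast
  note total = insert.prems(1)[rule_format] and trans = insert.prems(2)[rule_format]
  show ?case
  proof (cases "R w x")
    case True
    have "R y x" if "y \<in> F" for y
      using trans[of y w x] w that True by blast
    moreover have "R x x" using total[of x x] by blast
    ultimately show ?thesis by blast
  next
    case False
    then have "R x w" using total[of x w] w(1) by blast
    then show ?thesis using w by blast
  qed
qed

context
  fixes V tle
  assumes term_order: "term_order V tle"
begin

lemma term_order_antisym:
  "a \<in> mons_in V \<Longrightarrow> b \<in> mons_in V \<Longrightarrow> tle a b \<Longrightarrow> tle b a \<Longrightarrow> a = b"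
  using term_order unfolding term_order_def by blast

lemma term_order_add_right:
  "a \<in> mons_in V \<Longrightarrow> b \<in> mons_in V \<Longrightarrow> c \<in> mons_in V \<Longrightarrow> tle a b \<Longrightarrow> tle (a + c) (b + c)"
  using term_order unfolding term_order_def by blast

lemma term_order_total: "a \<in> mons_in V \<Longrightarrow> b \<in> mons_in V \<Longrightarrow> tle a b \<or> tle b a"
  using term_order unfolding term_order_def by blast

lemma term_order_trans:
  "a \<in> mons_in V \<Longrightarrow> b \<in> mons_in V \<Longrightarrow> c \<in> mons_in V \<Longrightarrow> tle a b \<Longrightarrow> tle b c \<Longrightarrow> tle a c"
  using term_order unfolding term_order_def by blast

lemma term_order_has_max:
  assumes "finite S" "S \<noteq> {}" "S \<subseteq> mons_in V"
  shows "\<exists>w\<in>S. \<forall>x\<in>S. tle x w"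
proof (rule finite_has_greatest_wrt[OF assms(1,2)])
  show "\<forall>a\<in>S. \<forall>b\<in>S. tle a b \<or> tle b a"
    using assms(3) term_order_total by blast
  show "\<forall>a\<in>S. \<forall>b\<in>S. \<forall>c\<in>S. tle a b \<longrightarrow> tle b c \<longrightarrow> tle a c"
    using assms(3) term_order_trans by blast
qed

lemma term_order_has_min:
  assumes "finite S" "S \<noteq> {}" "S \<subseteq> mons_in V"
  shows "\<exists>w\<in>S. \<forall>x\<in>S. tle w x"
proof (rule finite_has_greatest_wrt[OF assms(1,2), where R = "\<lambda>a b. tle b a"])
  show "\<forall>a\<in>S. \<forall>b\<in>S. tle b a \<or> tle a b"
    using assms(3) term_order_total by blast
  show "\<forall>a\<in>S. \<forall>b\<in>S. \<forall>c\<in>S. tle b a \<longrightarrow> tle c b \<longrightarrow> tle c a"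
    using assms(3) term_order_trans by blast
qed

lemma lead_mon_greatest:
  assumes "f \<in> poly_ring V" "f \<noteq> 0"
  shows "lead_mon tle f \<in> keys f" and "\<And>b. b \<in> keys f \<Longrightarrow> tle b (lead_mon tle f)"
proof -
  have sub: "keys f \<subseteq> mons_in V"
    using assms(1) unfolding poly_ring_def by simp
  obtain w where w: "w \<in> keys f" "\<forall>x\<in>keys f. tle x w"
    using term_order_has_max[OF finite_keys _ sub] assms(2) by auto
  have "lead_mon tle f = w"
    unfolding lead_mon_def
  proof (rule the_equality)
    show "w \<in> keys f \<and> (\<forall>b\<in>keys f. tle b w)" using w by simp
    show "a = w" if "a \<in> keys f \<and> (\<forall>b\<in>keys f. tle b a)" for a
      using that w sub term_order_antisym by blast
  qed
  then show "lead_mon tle f \<in> keys f" "\<And>b. b \<in> keys f \<Longrightarrow> tle b (lead_mon tle f)"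
    using w by simp_all
qed

end

section \<open>Ideals generated by homogeneous binomials\<close>

definition fiber_coeff_sum :: "(mon \<Rightarrow> 'd) \<Rightarrow> 'd \<Rightarrow> 'k::comm_ring_1 mpoly \<Rightarrow> 'k" where
  "fiber_coeff_sum deg d f = (\<Sum>a\<in>keys f. if deg a = d then lookup f a else 0)"

lemma fiber_coeff_sum_zero: "fiber_coeff_sum deg d 0 = 0"
  unfolding fiber_coeff_sum_def by simp

lemma fiber_coeff_sum_add:
  "fiber_coeff_sum deg d (f + g) = fiber_coeff_sum deg d f + fiber_coeff_sum deg d g"
  unfolding fiber_coeff_sum_def by (rule setsum_keys_plus_distrib) auto

lemma fiber_coeff_sum_uminus: "fiber_coeff_sum deg d (- f) = - fiber_coeff_sum deg d f"
  unfolding fiber_coeff_sum_def by (simp add: sum_negf[symmetric] if_distrib cong: if_cong)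

lemma fiber_coeff_sum_diff:
  "fiber_coeff_sum deg d (f - g) = fiber_coeff_sum deg d f - fiber_coeff_sum deg d g"
  using fiber_coeff_sum_add[of deg d f "- g"] fiber_coeff_sum_uminus[of deg d g] by simp

lemma fiber_coeff_sum_sum:
  "finite I \<Longrightarrow> fiber_coeff_sum deg d (\<Sum>i\<in>I. f i) = (\<Sum>i\<in>I. fiber_coeff_sum deg d (f i))"
  by (induct I rule: finite_induct) (simp_all add: fiber_coeff_sum_add fiber_coeff_sum_zero)

lemma fiber_coeff_sum_single: "fiber_coeff_sum deg d (single a c) = (if deg a = d then c else 0)"
  unfolding fiber_coeff_sum_def by simp

lemma poly_mapping_sum_single: "(q :: 'a \<Rightarrow>\<^sub>0 'b::comm_monoid_add) = (\<Sum>w\<in>keys q. single w (lookup q w))"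
  by (rule poly_mapping_eqI) (simp add: lookup_sum lookup_single when_def in_keys_iff)

lemma fiber_coeff_sum_mult_single:
  "fiber_coeff_sum deg d (q * single \<alpha> (1::'k::comm_ring_1))
     = (\<Sum>w\<in>keys q. if deg (w + \<alpha>) = d then lookup q w else 0)"
proof -
  have "q * single \<alpha> 1 = (\<Sum>w\<in>keys q. single w (lookup q w)) * single \<alpha> 1"
    by (subst poly_mapping_sum_single[of q]) simp
  also have "\<dots> = (\<Sum>w\<in>keys q. single (w + \<alpha>) (lookup q w))"
    by (simp add: sum_distrib_right mult_single)
  finally show ?thesis
    by (simp add: fiber_coeff_sum_sum fiber_coeff_sum_single)
qed

lemma fiber_coeff_sum_homogeneous_ideal:
  assumes "p \<in> gen_ideal V G"
    and homogeneous: "\<forall>g\<in>G. \<exists>\<alpha> \<beta>. deg \<alpha> = deg \<beta> \<and> g = single \<alpha> 1 - single \<beta> (1::'k::comm_ring_1)"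
    and deg_add: "\<And>a a' c. deg a = deg a' \<Longrightarrow> deg (c + a) = deg (c + a')"
  shows "fiber_coeff_sum deg d p = 0"
  using assms(1)
proof induct
  case zero
  then show ?case by (rule fiber_coeff_sum_zero)
next
  case (step p g q)
  then obtain \<alpha> \<beta> where "deg \<alpha> = deg \<beta>" and g: "g = single \<alpha> 1 - single \<beta> 1"
    using homogeneous by blast
  then have "deg (w + \<alpha>) = deg (w + \<beta>)" for w
    using deg_add by blast
  then show ?case
    using step(2) g
    by (simp add: right_diff_distrib fiber_coeff_sum_add fiber_coeff_sum_diff fiber_coeff_sum_mult_single)
qed

lemma homogeneous_ideal_keys_same_degree:
  assumes "f \<in> gen_ideal V G" "u \<in> keys f"
    and "\<forall>g\<in>G. \<exists>\<alpha> \<beta>. deg \<alpha> = deg \<beta> \<and> g = single \<alpha> 1 - single \<beta> (1::'k::comm_ring_1)"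
    and "\<And>a a' c. deg a = deg a' \<Longrightarrow> deg (c + a) = deg (c + a')"
  shows "\<exists>a\<in>keys f. a \<noteq> u \<and> deg a = deg u"
proof (rule ccontr)
  assume "\<not> ?thesis"
  then have "fiber_coeff_sum deg (deg u) f = lookup f u"
    unfolding fiber_coeff_sum_def using assms(2) by (auto simp: sum.remove intro!: sum.neutral)
  then show False
    using fiber_coeff_sum_homogeneous_ideal[OF assms(1,3,4)] assms(2) by (simp add: in_keys_iff)
qed

text \<open>Suppose each fiber of \<open>deg\<close> contains at most one \<open>standard\<close> monomial and every
  nonstandard monomial can be lowered inside its fiber. Then the standard monomial of a fiber
  is its minimum; as an element of the ideal has, besides its leading monomial, another monomial
  of the same degree, its leading monomial cannot be standard.\<close>

context
  fixes V :: "vtx set" and tle :: "mon \<Rightarrow> mon \<Rightarrow> bool"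
    and deg :: "mon \<Rightarrow> 'd" and standard :: "mon \<Rightarrow> bool"
  assumes term_order: "term_order V tle"
    and finite_fiber: "\<And>u. finite {w \<in> mons_in V. deg w = deg u}"
    and standard_unique:
      "\<And>u w. u \<in> mons_in V \<Longrightarrow> w \<in> mons_in V \<Longrightarrow> standard u \<Longrightarrow> standard w \<Longrightarrow> deg u = deg w
         \<Longrightarrow> u = w"
    and nonstandard_reducible:
      "\<And>w. w \<in> mons_in V \<Longrightarrow> \<not> standard w \<Longrightarrow> \<exists>w'\<in>mons_in V. deg w' = deg w \<and> tle w' w \<and> w' \<noteq> w"
begin

lemma standard_fiber_min:
  assumes u: "u \<in> mons_in V" "standard u" and u': "u' \<in> mons_in V" "deg u' = deg u"
  shows "tle u u'"
proof -
  define \<Phi> where "\<Phi> = {w \<in> mons_in V. deg w = deg u}"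
  obtain w0 where w0: "w0 \<in> \<Phi>" "\<forall>x\<in>\<Phi>. tle w0 x"
    using term_order_has_min[OF term_order finite_fiber, of u] u' unfolding \<Phi>_def by blast
  have "standard w0"
  proof (rule ccontr)
    assume "\<not> standard w0"
    then obtain w' where "w' \<in> mons_in V" "deg w' = deg w0" "tle w' w0" "w' \<noteq> w0"
      using nonstandard_reducible w0(1) unfolding \<Phi>_def by blast
    then have "w' \<in> \<Phi>" "tle w0 w'"
      using w0 unfolding \<Phi>_def by auto
    then show False
      using term_order_antisym[OF term_order] \<open>tle w' w0\<close> \<open>w' \<noteq> w0\<close> w0(1)
      unfolding \<Phi>_def by blast
  qed
  then have "w0 = u"
    using standard_unique u w0(1) unfolding \<Phi>_def by blast
  then show ?thesis
    using w0(2) u' unfolding \<Phi>_def by blast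
qed

lemma lead_mon_not_standard:
  assumes f: "(f :: 'k::comm_ring_1 mpoly) \<in> gen_ideal V G" "f \<noteq> 0"
    and G: "\<forall>g\<in>G. \<exists>\<alpha> \<beta>. \<alpha> \<in> mons_in V \<and> \<beta> \<in> mons_in V \<and> deg \<alpha> = deg \<beta>
                 \<and> g = single \<alpha> 1 - single \<beta> 1"
    and deg_add: "\<And>a a' c. deg a = deg a' \<Longrightarrow> deg (c + a) = deg (c + a')"
  shows "\<not> standard (lead_mon tle f)"
proof
  assume standard: "standard (lead_mon tle f)"
  have "G \<subseteq> poly_ring V"
    using G by (auto intro!: poly_ring_diff poly_ring_single)
  then have fV: "f \<in> poly_ring V"
    using gen_ideal_subset_poly_ring f(1) by blast
  then have keys_f: "keys f \<subseteq> mons_in V"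
    unfolding poly_ring_def by simp
  note u = lead_mon_greatest[OF term_order fV f(2)]
  have homogeneous: "\<forall>g\<in>G. \<exists>\<alpha> \<beta>. deg \<alpha> = deg \<beta> \<and> g = single \<alpha> 1 - single \<beta> 1"
    using G by blast
  obtain a where a: "a \<in> keys f" "a \<noteq> lead_mon tle f" "deg a = deg (lead_mon tle f)"
    using homogeneous_ideal_keys_same_degree[OF f(1) u(1) homogeneous deg_add] by blast
  have "tle (lead_mon tle f) a"
    using standard_fiber_min[OF _ standard _ a(3)] keys_f a(1) u(1) by blast
  then show False
    using u(2)[OF a(1)] term_order_antisym[OF term_order] keys_f a u(1) by blast
qed

end

section \<open>Multisets of points without strictly increasing pairs\<close>

definition staircase :: "('a \<Rightarrow> nat) \<Rightarrow> ('a \<Rightarrow> nat) \<Rightarrow> 'a multiset \<Rightarrow> bool" where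
  "staircase f1 f2 A \<longleftrightarrow> (\<forall>p\<in>#A. \<forall>q\<in>#A. \<not> (f1 p < f1 q \<and> f2 p < f2 q))"

lemma staircase_subset: "staircase f1 f2 A \<Longrightarrow> B \<subseteq># A \<Longrightarrow> staircase f1 f2 B"
  unfolding staircase_def by (meson mset_subset_eqD)

lemma staircase_corner:
  assumes "staircase f1 f2 A" "A \<noteq> {#}"
  shows "\<exists>p\<in>#A. f1 p = Max (f1 ` set_mset A) \<and> f2 p = Min (f2 ` set_mset A)"
proof -
  define a0 where "a0 = Max (f1 ` set_mset A)"
  define S0 where "S0 = {p \<in> set_mset A. f1 p = a0}"
  have "a0 \<in> f1 ` set_mset A"
    unfolding a0_def using assms(2) by (intro Max_in) auto
  then have "S0 \<noteq> {}" "finite S0"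
    unfolding S0_def by auto
  then have "Min (f2 ` S0) \<in> f2 ` S0"
    by (intro Min_in) auto
  then obtain p where p: "p \<in> S0" "f2 p = Min (f2 ` S0)"
    by auto
  have pA: "p \<in># A" and fp: "f1 p = a0"
    using p unfolding S0_def by auto
  have "f2 p \<le> f2 q" if q: "q \<in># A" for q
  proof (cases "f1 q = a0")
    case True
    then show ?thesis using p q \<open>finite S0\<close> unfolding S0_def by simp
  next
    case False
    have "f1 q \<le> a0"
      using q unfolding a0_def by simp
    with False fp have "f1 q < f1 p"
      by simp
    then show ?thesis using assms(1) q pA unfolding staircase_def by fastforce
  qed
  then have "Min (f2 ` set_mset A) = f2 p"
    using pA by (intro Min_eqI) auto
  then show ?thesis using pA fp unfolding a0_def by auto
qed

text \<open>Induction: the marginals determine the corner with the largest first and the smallest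
  second coordinate.\<close>
lemma staircase_eq_by_marginals:
  assumes "staircase f1 f2 A" "staircase f1 f2 B"
    "image_mset f1 A = image_mset f1 B" "image_mset f2 A = image_mset f2 B"
  shows "image_mset (\<lambda>p. (f1 p, f2 p)) A = image_mset (\<lambda>p. (f1 p, f2 p)) B"
  using assms
proof (induction "size A" arbitrary: A B rule: less_induct)
  case less
  show ?case
  proof (cases "A = {#}")
    case True
    then show ?thesis using less.prems(3) by simp
  next
    case False
    then have "B \<noteq> {#}" using less.prems(3) by auto
    obtain p where p: "p \<in># A" "f1 p = Max (f1 ` set_mset A)" "f2 p = Min (f2 ` set_mset A)"
      using staircase_corner[OF less.prems(1) False] by blast
    obtain p' where p': "p' \<in># B" "f1 p' = Max (f1 ` set_mset B)" "f2 p' = Min (f2 ` set_mset B)"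
      using staircase_corner[OF less.prems(2) \<open>B \<noteq> {#}\<close>] by blast
    have "f1 ` set_mset A = f1 ` set_mset B" "f2 ` set_mset A = f2 ` set_mset B"
      using less.prems(3,4) by (metis set_image_mset)+
    then have e1: "f1 p = f1 p'" and e2: "f2 p = f2 p'"
      using p p' by auto
    define A' where "A' = A - {#p#}"
    define B' where "B' = B - {#p'#}"
    have A: "A = add_mset p A'" and B: "B = add_mset p' B'"
      unfolding A'_def B'_def using p(1) p'(1) by simp_all
    have "image_mset (\<lambda>p. (f1 p, f2 p)) A' = image_mset (\<lambda>p. (f1 p, f2 p)) B'"
    proof (rule less.hyps)
      show "size A' < size A" using A by simp
      show "staircase f1 f2 A'" "staircase f1 f2 B'"
        using staircase_subset[OF less.prems(1), of A'] staircase_subset[OF less.prems(2), of B'] A B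
        by simp_all
      show "image_mset f1 A' = image_mset f1 B'" "image_mset f2 A' = image_mset f2 B'"
        using less.prems(3,4) A B e1 e2 by simp_all
    qed
    then show ?thesis using A B e1 e2 by simp
  qed
qed

lemma mset_pair_eqI:
  assumes "\<And>k. image_mset snd (filter_mset (\<lambda>z. fst z = k) X)
              = image_mset snd (filter_mset (\<lambda>z. fst z = k) Y)"
  shows "X = Y"
proof (rule multiset_eqI)
  have count_fiber: "count (image_mset snd (filter_mset (\<lambda>z. fst z = k) Z)) y = count Z (k, y)"
    for Z :: "('a \<times> 'b) multiset" and k y
    by (induct Z) auto
  fix z :: "'a \<times> 'b"
  show "count X z = count Y z"
    using assms[of "fst z"] count_fiber[of "fst z" X "snd z"] count_fiber[of "fst z" Y "snd z"] by simp
qed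

definition staircase3 :: "('a \<Rightarrow> nat) \<Rightarrow> ('a \<Rightarrow> nat) \<Rightarrow> ('a \<Rightarrow> nat) \<Rightarrow> 'a multiset \<Rightarrow> bool" where
  "staircase3 k i j X \<longleftrightarrow> staircase k i X \<and> staircase k j X \<and>
     (\<forall>b. staircase i j (filter_mset (\<lambda>v. k v = b) X))"

lemma image_mset_filter_fiber:
  "image_mset g (filter_mset (\<lambda>v. k v = b) X)
     = image_mset snd (filter_mset (\<lambda>z. fst z = b) (image_mset (\<lambda>v. (k v, g v)) X))"
  by (simp add: filter_mset_image_mset image_mset.compositionality comp_def)

lemma staircase3_eq_by_marginals:
  assumes "staircase3 k i j M" "staircase3 k i j N"
    and "image_mset i M = image_mset i N" "image_mset j M = image_mset j N"
      "image_mset k M = image_mset k N"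
    and inj: "\<And>z w. z \<in># M \<Longrightarrow> w \<in># N \<Longrightarrow> (k z, i z, j z) = (k w, i w, j w) \<Longrightarrow> z = w"
  shows "M = N"
proof -
  have ki: "image_mset (\<lambda>p. (k p, i p)) M = image_mset (\<lambda>p. (k p, i p)) N"
    using assms(1,2) staircase_eq_by_marginals[OF _ _ assms(5,3)] unfolding staircase3_def by blast
  have kj: "image_mset (\<lambda>p. (k p, j p)) M = image_mset (\<lambda>p. (k p, j p)) N"
    using assms(1,2) staircase_eq_by_marginals[OF _ _ assms(5,4)] unfolding staircase3_def by blast
  have blocks: "image_mset (\<lambda>p. (i p, j p)) (filter_mset (\<lambda>v. k v = b) M)
      = image_mset (\<lambda>p. (i p, j p)) (filter_mset (\<lambda>v. k v = b) N)" for b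
  proof (rule staircase_eq_by_marginals)
    show "staircase i j (filter_mset (\<lambda>v. k v = b) M)" "staircase i j (filter_mset (\<lambda>v. k v = b) N)"
      using assms(1,2) by (simp_all add: staircase3_def)
    show "image_mset i (filter_mset (\<lambda>v. k v = b) M) = image_mset i (filter_mset (\<lambda>v. k v = b) N)"
      unfolding image_mset_filter_fiber[of i k b] ki ..
    show "image_mset j (filter_mset (\<lambda>v. k v = b) M) = image_mset j (filter_mset (\<lambda>v. k v = b) N)"
      unfolding image_mset_filter_fiber[of j k b] kj ..
  qed
  have triples: "image_mset (\<lambda>v. (k v, i v, j v)) M = image_mset (\<lambda>v. (k v, i v, j v)) N"
  proof (rule mset_pair_eqI)
    fix b
    show "image_mset snd (filter_mset (\<lambda>z. fst z = b) (image_mset (\<lambda>v. (k v, i v, j v)) M))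
        = image_mset snd (filter_mset (\<lambda>z. fst z = b) (image_mset (\<lambda>v. (k v, i v, j v)) N))"
      using blocks[of b] unfolding image_mset_filter_fiber[of "\<lambda>p. (i p, j p)" k b] .
  qed
  show ?thesis
    using multiset.inj_map_strong[OF _ triples] inj by blast
qed

text \<open>Column \<open>c\<close> of \<open>H\<close> lies in block \<open>block n (i, c)\<close> of \<open>H = (X\<^sub>1 \<dots> X\<^sub>r)\<close> and is its column
  \<open>block_col n (i, c)\<close>, both counted from 0.\<close>
definition block :: "nat \<Rightarrow> vtx \<Rightarrow> nat" where
  "block n v = (snd v - 1) div n"

definition block_col :: "nat \<Rightarrow> vtx \<Rightarrow> nat" where
  "block_col n v = (snd v - 1) mod n"

lemma finite_vertex_set: "finite (vertex_set m n r)"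
  by (rule finite_subset[of _ "{1..m} \<times> {1..n * r}"]) (auto simp: vertex_set_def)

lemma snd_eq_block: "1 \<le> snd v \<Longrightarrow> snd v = block n v * n + block_col n v + 1"
  unfolding block_def block_col_def by simp

lemma block_col_less: "1 \<le> n \<Longrightarrow> block_col n v < n"
  unfolding block_col_def by simp

lemma block_less: "v \<in> vertex_set m n r \<Longrightarrow> block n v < r"
  unfolding vertex_set_def block_def
  by (auto simp: less_mult_imp_div_less mult.commute)

lemma block_of_column:
  assumes "1 \<le> j" "j \<le> n"
  shows "block n (i, K * n + j) = K" "block_col n (i, K * n + j) = j - 1"
proof -
  have "K * n + j - 1 = K * n + (j - 1)" "j - 1 < n"
    using assms by simp_all
  then show "block n (i, K * n + j) = K" "block_col n (i, K * n + j) = j - 1"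
    unfolding block_def block_col_def by simp_all
qed

lemma snd_less_if_block_less:
  assumes "1 \<le> snd p" "1 \<le> snd q" "block n p < block n q" "1 \<le> n"
  shows "snd p < snd q"
proof -
  have "(block n p + 1) * n \<le> block n q * n"
    using assms(3) by (intro mult_right_mono) simp_all
  then show ?thesis
    using snd_eq_block[OF assms(1), of n] snd_eq_block[OF assms(2), of n] block_col_less[OF assms(4), of p]
    by (simp add: algebra_simps)
qed

lemma Vmat_coords:
  assumes "1 \<le> a" "1 \<le> c" "c \<le> n"
  shows "fst (Vmat m n a c) = (a - 1) mod m + 1"
    and "snd (Vmat m n a c) = (a - 1) div m * n + c"
    and "block n (Vmat m n a c) = (a - 1) div m"
    and "block_col n (Vmat m n a c) = c - 1"
proof -
  show "fst (Vmat m n a c) = (a - 1) mod m + 1" and s: "snd (Vmat m n a c) = (a - 1) div m * n + c"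
    unfolding Vmat_def Let_def by simp_all
  then show "block n (Vmat m n a c) = (a - 1) div m" "block_col n (Vmat m n a c) = c - 1"
    using block_of_column[OF assms(2,3), of "fst (Vmat m n a c)" "(a - 1) div m"]
    by (metis prod.collapse)+
qed

lemma Vmat_in_vertex_set:
  assumes "1 \<le> m" "1 \<le> a" "a \<le> m * r" "1 \<le> c" "c \<le> n"
  shows "Vmat m n a c \<in> vertex_set m n r"
proof -
  have "(a - 1) div m < r"
    using assms by (simp add: less_mult_imp_div_less mult.commute)
  then have "((a - 1) div m + 1) * n \<le> r * n"
    by (intro mult_right_mono) simp_all
  then have "(a - 1) div m * n + c \<le> n * r"
    using assms by (simp add: algebra_simps)
  moreover have "(a - 1) mod m + 1 \<le> m"
    using assms(1) by (simp add: Suc_le_eq)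
  ultimately show ?thesis
    using Vmat_coords(1,2)[OF assms(2,4,5), of m] assms unfolding vertex_set_def
    by (cases "Vmat m n a c") auto
qed

lemma Vmat_position:
  assumes "1 \<le> m" "1 \<le> n" "v \<in> vertex_set m n r"
  defines "a \<equiv> block n v * m + fst v"
  shows "Vmat m n a (block_col n v + 1) = v" and "1 \<le> a" and "a \<le> m * r"
proof -
  obtain i c where v: "v = (i, c)" "1 \<le> i" "i \<le> m" "1 \<le> c"
    using assms(3) unfolding vertex_set_def by auto
  have "a - 1 = (i - 1) + block n v * m" and "i - 1 < m"
    using v unfolding a_def by simp_all
  then have "(a - 1) div m = block n v" "(a - 1) mod m = i - 1"
    by simp_all
  then show "Vmat m n a (block_col n v + 1) = v"
    using v snd_eq_block[of v n] block_col_less[OF assms(2), of v] unfolding Vmat_def Let_def by simp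
  show "1 \<le> a"
    using v unfolding a_def by simp
  have "(block n v + 1) * m \<le> r * m"
    using block_less[OF assms(3)] by (intro mult_right_mono) simp_all
  then show "a \<le> m * r"
    using v unfolding a_def by (simp add: algebra_simps)
qed

text \<open>\<open>p\<close> and \<open>q\<close> are the diagonal entries of a 2-minor of \<open>H\<close> or of \<open>V\<close>, so that under a diagonal
  order \<open>x\<^sub>p x\<^sub>q\<close> is the leading term of that minor.\<close>
definition diagonal_pair :: "nat \<Rightarrow> nat \<Rightarrow> nat \<Rightarrow> vtx \<Rightarrow> vtx \<Rightarrow> bool" where
  "diagonal_pair m n r p q \<longleftrightarrow>
     (\<exists>a b c d. (a, b, c, d) \<in> minor_idx m (n * r) \<and> p = Hmat n a c \<and> q = Hmat n b d) \<or>
     (\<exists>a b c d. (a, b, c, d) \<in> minor_idx (m * r) n \<and> p = Vmat m n a c \<and> q = Vmat m n b d)"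

definition diagonal_free :: "nat \<Rightarrow> nat \<Rightarrow> nat \<Rightarrow> vtx set \<Rightarrow> bool" where
  "diagonal_free m n r F \<longleftrightarrow> (\<forall>p\<in>F. \<forall>q\<in>F. \<not> diagonal_pair m n r p q)"

lemma Hmat_diagonal_iff:
  assumes "p \<in> vertex_set m n r" "q \<in> vertex_set m n r"
  shows "(\<exists>a b c d. (a, b, c, d) \<in> minor_idx m (n * r) \<and> p = Hmat n a c \<and> q = Hmat n b d)
    \<longleftrightarrow> fst p < fst q \<and> snd p < snd q"
  using assms unfolding minor_idx_def Hmat_def vertex_set_def
  by (cases p; cases q) auto

lemma Vmat_diagonal_imp:
  assumes "1 \<le> m" "(a, b, c, d) \<in> minor_idx (m * r) n"
  shows "(block n (Vmat m n a c) < block n (Vmat m n b d) \<or>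
      block n (Vmat m n a c) = block n (Vmat m n b d) \<and> fst (Vmat m n a c) < fst (Vmat m n b d))
    \<and> block_col n (Vmat m n a c) < block_col n (Vmat m n b d)"
proof -
  have idx: "1 \<le> a" "a < b" "1 \<le> c" "c < d" "d \<le> n" "1 \<le> b" "1 \<le> d" "c \<le> n"
    using assms(2) unfolding minor_idx_def by auto
  have "(a - 1) div m < (b - 1) div m \<or>
      (a - 1) div m = (b - 1) div m \<and> (a - 1) mod m < (b - 1) mod m"
  proof (cases "(a - 1) div m = (b - 1) div m")
    case True
    then have "(a - 1) div m * m = (b - 1) div m * m"
      by simp
    then show ?thesis
      using True idx div_mult_mod_eq[of "a - 1" m] div_mult_mod_eq[of "b - 1" m] by linarith
  next
    case False
    moreover have "(a - 1) div m \<le> (b - 1) div m"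
      using idx by (simp add: div_le_mono)
    ultimately show ?thesis
      by simp
  qed
  then show ?thesis
    unfolding Vmat_coords[OF idx(1,3,8)] Vmat_coords[OF idx(6,7,5)] using idx by simp
qed

lemma Vmat_diagonal_iff:
  assumes "1 \<le> m" "1 \<le> n" "p \<in> vertex_set m n r" "q \<in> vertex_set m n r"
  shows "(\<exists>a b c d. (a, b, c, d) \<in> minor_idx (m * r) n \<and> p = Vmat m n a c \<and> q = Vmat m n b d)
    \<longleftrightarrow> (block n p < block n q \<or> block n p = block n q \<and> fst p < fst q) \<and> block_col n p < block_col n q"
    (is "?diag \<longleftrightarrow> ?coords")
proof
  assume ?diag
  then show ?coords
    using Vmat_diagonal_imp[OF assms(1)] by blast
next
  assume coords: ?coords
  define a where "a = block n p * m + fst p"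
  define b where "b = block n q * m + fst q"
  note pos_p = Vmat_position[OF assms(1,2,3)] and pos_q = Vmat_position[OF assms(1,2,4)]
  have rows: "1 \<le> fst p" "fst p \<le> m" "1 \<le> fst q"
    using assms(3,4) unfolding vertex_set_def by auto
  have "a < b"
  proof (cases "block n p < block n q")
    case True
    then have "(block n p + 1) * m \<le> block n q * m"
      by (intro mult_right_mono) simp_all
    then show ?thesis
      using rows unfolding a_def b_def by (simp add: algebra_simps)
  next
    case False
    then show ?thesis
      using coords unfolding a_def b_def by simp
  qed
  then have "(a, b, block_col n p + 1, block_col n q + 1) \<in> minor_idx (m * r) n"
    using pos_q(3) coords block_col_less[OF assms(2), of q] rows unfolding minor_idx_def a_def b_def
    by (simp add: Suc_le_eq)
  then show ?diag
    using pos_p(1) pos_q(1) unfolding a_def b_def by metis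
qed

lemma diagonal_pair_iff:
  assumes "1 \<le> m" "1 \<le> n" "p \<in> vertex_set m n r" "q \<in> vertex_set m n r"
  shows "diagonal_pair m n r p q \<longleftrightarrow> (fst p < fst q \<and> snd p < snd q) \<or>
     ((block n p < block n q \<or> block n p = block n q \<and> fst p < fst q) \<and> block_col n p < block_col n q)"
  unfolding diagonal_pair_def Hmat_diagonal_iff[OF assms(3,4)] Vmat_diagonal_iff[OF assms] ..

lemma diagonal_pair_neq:
  "1 \<le> m \<Longrightarrow> 1 \<le> n \<Longrightarrow> p \<in> vertex_set m n r \<Longrightarrow> q \<in> vertex_set m n r \<Longrightarrow> diagonal_pair m n r p q
    \<Longrightarrow> p \<noteq> q"
  using diagonal_pair_iff by fastforce

section \<open>The multigrading and the 2-minors\<close>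

definition mon_mset :: "mon \<Rightarrow> vtx multiset" where
  "mon_mset w = Abs_multiset (lookup w)"

lemma count_mon_mset [simp]: "count (mon_mset w) = lookup w"
proof -
  have "{x. 0 < lookup w x} = keys w"
    by (auto simp: in_keys_iff)
  then show ?thesis
    unfolding mon_mset_def by simp
qed

lemma set_mon_mset [simp]: "set_mset (mon_mset w) = keys w"
  by (auto simp: set_mset_def in_keys_iff)

lemma mon_mset_add: "mon_mset (a + b) = mon_mset a + mon_mset b"
  by (rule multiset_eqI) (simp add: lookup_add)

lemma mon_mset_vmon: "mon_mset (vmon v) = {#v#}"
  by (rule multiset_eqI) (simp add: lookup_single when_def)

lemma mon_mset_inject: "mon_mset a = mon_mset b \<Longrightarrow> a = b"
  by (metis count_mon_mset poly_mapping_eqI)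

lemma vmon_pair_neq: "p \<notin> {p', q'} \<Longrightarrow> vmon p + vmon q \<noteq> vmon p' + vmon q'"
proof
  assume "p \<notin> {p', q'}" "vmon p + vmon q = vmon p' + vmon q'"
  then have "mon_mset (vmon p + vmon q) = mon_mset (vmon p' + vmon q')"
    by simp
  then have eq: "{#p#} + {#q#} = {#p'#} + {#q'#}"
    unfolding mon_mset_add mon_mset_vmon .
  have "p \<in># {#p#} + {#q#}"
    by simp
  then have "p \<in># {#p'#} + {#q'#}"
    unfolding eq .
  then show False
    using \<open>p \<notin> {p', q'}\<close> by simp
qed

text \<open>All 2-minors of \<open>H\<close> and of \<open>V\<close> are homogeneous for this grading.\<close>
definition multideg :: "nat \<Rightarrow> mon \<Rightarrow> nat multiset \<times> nat multiset \<times> nat multiset" where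
  "multideg n w = (image_mset fst (mon_mset w), image_mset (block_col n) (mon_mset w),
     image_mset (block n) (mon_mset w))"

lemma multideg_add: "multideg n a = multideg n a' \<Longrightarrow> multideg n (c + a) = multideg n (c + a')"
  by (simp add: multideg_def mon_mset_add)

lemma finite_multideg_fiber:
  assumes "finite V"
  shows "finite {w \<in> mons_in V. multideg n w = multideg n u}"
proof -
  define s where "s = size (mon_mset u)"
  let ?\<Phi> = "{w \<in> mons_in V. multideg n w = multideg n u}"
  have "mon_mset ` ?\<Phi> \<subseteq> mset ` {xs. set xs \<subseteq> V \<and> length xs = s}"
  proof
    fix M assume "M \<in> mon_mset ` ?\<Phi>"
    then obtain w where w: "w \<in> mons_in V" "multideg n w = multideg n u" "M = mon_mset w"
      by auto
    obtain xs where xs: "mset xs = M"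
      using ex_mset by blast
    have "size (image_mset fst M) = size (image_mset fst (mon_mset u))"
      using w(2,3) unfolding multideg_def by simp
    then have "length xs = s"
      using xs unfolding s_def by (simp flip: size_mset)
    moreover have "set xs \<subseteq> V"
      using w(1,3) xs unfolding mons_in_def by (simp flip: set_mset_mset)
    ultimately show "M \<in> mset ` {xs. set xs \<subseteq> V \<and> length xs = s}"
      using xs by blast
  qed
  moreover have "finite (mset ` {xs. set xs \<subseteq> V \<and> length xs = s})"
    using finite_lists_length_eq[OF assms] by simp
  ultimately have "finite (mon_mset ` ?\<Phi>)"
    by (rule finite_subset)
  moreover have "inj_on mon_mset ?\<Phi>"
    by (rule inj_onI) (rule mon_mset_inject)
  ultimately show ?thesis
    by (rule finite_imageD)
qed

lemma minor2_eq:
  "(minor2 M a b c d :: 'k::comm_ring_1 mpoly)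
     = single (vmon (M a c) + vmon (M b d)) 1 - single (vmon (M a d) + vmon (M b c)) 1"
  unfolding minor2_def var_def by (simp add: mult_single)

definition homogeneous_binomial :: "nat \<Rightarrow> vtx set \<Rightarrow> 'k::comm_ring_1 mpoly \<Rightarrow> mon \<Rightarrow> mon \<Rightarrow> bool"
  where "homogeneous_binomial n V g X Y \<longleftrightarrow> g = single X 1 - single Y 1 \<and> X \<noteq> Y
     \<and> multideg n X = multideg n Y \<and> X \<in> mons_in V \<and> Y \<in> mons_in V"

lemma keys_binomial: "X \<noteq> Y \<Longrightarrow> keys (single X 1 - single Y (1::'k::comm_ring_1)) = {X, Y}"
  by (rule set_eqI) (simp add: in_keys_iff lookup_minus lookup_single when_def, blast)

lemma homogeneous_binomial_nonzero:
  assumes "homogeneous_binomial n V g X Y"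
  shows "g \<noteq> 0"
proof -
  have "g = single X 1 - single Y 1" "X \<noteq> Y"
    using assms unfolding homogeneous_binomial_def by simp_all
  then have "keys g = {X, Y}"
    using keys_binomial by simp
  then show ?thesis
    by auto
qed

lemma homogeneous_binomial_ex:
  assumes "homogeneous_binomial n V g X Y"
  shows "\<exists>\<alpha> \<beta>. \<alpha> \<in> mons_in V \<and> \<beta> \<in> mons_in V \<and> multideg n \<alpha> = multideg n \<beta>
     \<and> g = single \<alpha> 1 - single \<beta> 1"
  using assms unfolding homogeneous_binomial_def by (intro exI[of _ X] exI[of _ Y]) simp

lemma homogeneous_binomialI:
  assumes "p \<notin> {p', q'}" "p \<in> V" "q \<in> V" "p' \<in> V" "q' \<in> V"
    and "{#fst p, fst q#} = {#fst p', fst q'#}"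
    and "{#block_col n p, block_col n q#} = {#block_col n p', block_col n q'#}"
    and "{#block n p, block n q#} = {#block n p', block n q'#}"
  shows "homogeneous_binomial n V (single (vmon p + vmon q) 1 - single (vmon p' + vmon q') (1::'k::comm_ring_1))
    (vmon p + vmon q) (vmon p' + vmon q')"
  unfolding homogeneous_binomial_def multideg_def mon_mset_add mon_mset_vmon
  using assms vmon_pair_neq[OF assms(1)] by (simp add: mons_in_add mons_in_single add_mset_commute)

lemma Hmat_minor_homogeneous:
  assumes "(a, b, c, d) \<in> minor_idx m (n * r)"
  shows "homogeneous_binomial n (vertex_set m n r) (minor2 (Hmat n) a b c d :: 'k::comm_ring_1 mpoly)
    (vmon (Hmat n a c) + vmon (Hmat n b d)) (vmon (Hmat n a d) + vmon (Hmat n b c))"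
  unfolding minor2_eq Hmat_def
proof (rule homogeneous_binomialI)
  have idx: "1 \<le> a" "a < b" "b \<le> m" "1 \<le> c" "c < d" "d \<le> n * r"
    using assms unfolding minor_idx_def by auto
  then show "(a, c) \<notin> {(a, d), (b, c)}"
    by simp
  show "(a, c) \<in> vertex_set m n r" "(b, d) \<in> vertex_set m n r"
    "(a, d) \<in> vertex_set m n r" "(b, c) \<in> vertex_set m n r"
    using idx unfolding vertex_set_def by auto
qed (simp_all add: block_def block_col_def add_mset_commute)

lemma Vmat_minor_homogeneous:
  assumes "1 \<le> m" "(a, b, c, d) \<in> minor_idx (m * r) n"
  shows "homogeneous_binomial n (vertex_set m n r) (minor2 (Vmat m n) a b c d :: 'k::comm_ring_1 mpoly)
    (vmon (Vmat m n a c) + vmon (Vmat m n b d)) (vmon (Vmat m n a d) + vmon (Vmat m n b c))"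
  unfolding minor2_eq
proof (rule homogeneous_binomialI)
  have idx: "1 \<le> a" "a < b" "b \<le> m * r" "1 \<le> c" "c < d" "d \<le> n" "1 \<le> b" "1 \<le> d" "c \<le> n"
    using assms(2) unfolding minor_idx_def by auto
  note ac = Vmat_coords[OF idx(1,4,9), where m = m] and bd = Vmat_coords[OF idx(7,8,6), where m = m]
    and ad = Vmat_coords[OF idx(1,8,6), where m = m] and bc = Vmat_coords[OF idx(7,4,9), where m = m]
  show "Vmat m n a c \<in> vertex_set m n r" "Vmat m n b d \<in> vertex_set m n r"
    "Vmat m n a d \<in> vertex_set m n r" "Vmat m n b c \<in> vertex_set m n r"
    using idx by (auto intro!: Vmat_in_vertex_set[OF assms(1)])
  have "Vmat m n a c \<noteq> Vmat m n a d"
  proof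
    assume "Vmat m n a c = Vmat m n a d"
    then have "c - 1 = d - 1"
      using ac(4) ad(4) by simp
    then show False
      using idx by simp
  qed
  moreover have "Vmat m n a c \<noteq> Vmat m n b c"
  proof
    assume "Vmat m n a c = Vmat m n b c"
    then have "(a - 1) mod m = (b - 1) mod m" "(a - 1) div m = (b - 1) div m"
      using ac(1,3) bc(1,3) by simp_all
    then have "a - 1 = b - 1"
      by (metis div_mod_decomp)
    then show False
      using idx by simp
  qed
  ultimately show "Vmat m n a c \<notin> {Vmat m n a d, Vmat m n b c}"
    by simp
  show "{#fst (Vmat m n a c), fst (Vmat m n b d)#} = {#fst (Vmat m n a d), fst (Vmat m n b c)#}"
    "{#block_col n (Vmat m n a c), block_col n (Vmat m n b d)#}
       = {#block_col n (Vmat m n a d), block_col n (Vmat m n b c)#}"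
    "{#block n (Vmat m n a c), block n (Vmat m n b d)#} = {#block n (Vmat m n a d), block n (Vmat m n b c)#}"
    unfolding ac bd ad bc by (simp_all add: add_mset_commute)
qed

lemma minors_HV_homogeneous:
  assumes "1 \<le> m"
  shows "\<forall>g\<in>(minors_HV m n r :: 'k::comm_ring_1 mpoly set). \<exists>\<alpha> \<beta>. \<alpha> \<in> mons_in (vertex_set m n r)
    \<and> \<beta> \<in> mons_in (vertex_set m n r) \<and> multideg n \<alpha> = multideg n \<beta> \<and> g = single \<alpha> 1 - single \<beta> 1"
proof
  fix g :: "'k mpoly"
  assume "g \<in> minors_HV m n r"
  then consider (H) a b c d where "(a, b, c, d) \<in> minor_idx m (n * r)" "g = minor2 (Hmat n) a b c d"
    | (V) a b c d where "(a, b, c, d) \<in> minor_idx (m * r) n" "g = minor2 (Vmat m n) a b c d"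
    unfolding minors_HV_def by blast
  then show "\<exists>\<alpha> \<beta>. \<alpha> \<in> mons_in (vertex_set m n r) \<and> \<beta> \<in> mons_in (vertex_set m n r)
    \<and> multideg n \<alpha> = multideg n \<beta> \<and> g = single \<alpha> 1 - single \<beta> 1"
  proof cases
    case H
    then show ?thesis
      using homogeneous_binomial_ex[OF Hmat_minor_homogeneous[OF H(1)]] by simp
  next
    case V
    then show ?thesis
      using homogeneous_binomial_ex[OF Vmat_minor_homogeneous[OF assms V(1)]] by simp
  qed
qed

lemma sqfree_mon_in_SR_ideal_iff:
  assumes "simplicial_complex P \<Delta>" "finite P" "F \<subseteq> P"
  shows "(sqfree_mon F :: 'k::comm_ring_1 mpoly) \<in> SR_ideal P \<Delta> \<longleftrightarrow> F \<notin> \<Delta>"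
proof
  assume F: "(sqfree_mon F :: 'k mpoly) \<in> SR_ideal P \<Delta>"
  let ?A = "{\<Sum>v\<in>G. vmon v | G. G \<subseteq> P \<and> G \<notin> \<Delta>}"
  have gens: "\<forall>g\<in>{sqfree_mon G | G. G \<subseteq> P \<and> G \<notin> \<Delta>}. \<exists>a\<in>?A. g = single a (1::'k)"
  proof
    fix g :: "'k mpoly"
    assume "g \<in> {sqfree_mon G | G. G \<subseteq> P \<and> G \<notin> \<Delta>}"
    then obtain G where g: "g = sqfree_mon G" and G: "G \<subseteq> P" "G \<notin> \<Delta>"
      by blast
    from G have "(\<Sum>v\<in>G. vmon v) \<in> ?A"
      by blast
    then show "\<exists>a\<in>?A. g = single a 1"
      unfolding g sqfree_mon_def by (rule bexI[rotated]) simp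
  qed
  obtain a where a: "a \<in> ?A" "keys a \<subseteq> F"
    using sqfree_mon_in_monomial_ideal[OF finite_subset[OF assms(3,2)] F[unfolded SR_ideal_def] gens]
    by blast
  then obtain G where G: "a = (\<Sum>v\<in>G. vmon v)" "G \<subseteq> P" "G \<notin> \<Delta>"
    by blast
  have "G \<subseteq> F"
    using a(2) keys_sum_vmon[OF finite_subset[OF G(2) assms(2)]] unfolding G(1) by simp
  then show "F \<notin> \<Delta>"
    using G(3) assms(1) unfolding simplicial_complex_def by blast
next
  assume "F \<notin> \<Delta>"
  then show "sqfree_mon F \<in> SR_ideal P \<Delta>"
    unfolding SR_ideal_def using assms(3) by (intro gen_ideal_generator) blast
qed

lemma lead_mon_in_initial_ideal:
  "f \<in> I \<Longrightarrow> f \<noteq> 0 \<Longrightarrow> single (lead_mon tle f) (1::'k::comm_ring_1) \<in> initial_ideal V tle I"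
  unfolding initial_ideal_def by (rule gen_ideal_generator) blast

lemma sqfree_mon_in_initial_ideal:
  assumes "finite F" "(sqfree_mon F :: 'k::comm_ring_1 mpoly) \<in> initial_ideal V tle I"
  shows "\<exists>f\<in>I. f \<noteq> 0 \<and> keys (lead_mon tle f) \<subseteq> F"
proof -
  let ?A = "lead_mon tle ` {f \<in> I. f \<noteq> 0}"
  have gens: "\<forall>g\<in>{single (lead_mon tle f) (1::'k) | f. f \<in> I \<and> f \<noteq> 0}. \<exists>a\<in>?A. g = single a 1"
  proof
    fix g :: "'k mpoly"
    assume "g \<in> {single (lead_mon tle f) 1 | f. f \<in> I \<and> f \<noteq> 0}"
    then obtain f where "g = single (lead_mon tle f) 1" "f \<in> I" "f \<noteq> 0"
      by blast
    then show "\<exists>a\<in>?A. g = single a 1"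
      by blast
  qed
  obtain a where "a \<in> ?A" "keys a \<subseteq> F"
    using sqfree_mon_in_monomial_ideal[OF assms(1) assms(2)[unfolded initial_ideal_def] gens] by blast
  then show ?thesis
    by blast
qed

lemma sqfree_mon_in_ideal_if_pair:
  assumes "finite F" "F \<subseteq> V" "p \<in> F" "q \<in> F" "p \<noteq> q"
    and "single (vmon p + vmon q) (1::'k::comm_ring_1) \<in> gen_ideal V G"
  shows "sqfree_mon F \<in> gen_ideal V G"
proof -
  have "(\<Sum>v\<in>F. vmon v) = vmon p + (vmon q + (\<Sum>v\<in>F - {p} - {q}. vmon v))"
    using assms(1,3,4,5) by (simp add: sum.remove[of F p] sum.remove[of "F - {p}" q])
  then have "sqfree_mon F = single (\<Sum>v\<in>F - {p} - {q}. vmon v) 1 * single (vmon p + vmon q) (1::'k)"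
    unfolding sqfree_mon_def by (simp add: mult_single algebra_simps)
  moreover have "single (\<Sum>v\<in>F - {p} - {q}. vmon v) (1::'k) \<in> poly_ring V"
    using assms(2) by (intro poly_ring_single mons_in_sum_vmon) auto
  ultimately show ?thesis
    using gen_ideal_mult_left[OF assms(6)] by simp
qed

section \<open>The initial ideal of \<open>I\<^sub>m\<^sub>n\<^sup>r\<close>\<close>

locale grid =
  fixes m n r :: nat
  assumes m_pos: "1 \<le> m" and n_pos: "1 \<le> n" and r_pos: "1 \<le> r"
begin

abbreviation P :: "vtx set" where
  "P \<equiv> vertex_set m n r"

lemma diagonal_free_staircase3:
  assumes "w \<in> mons_in P" "diagonal_free m n r (keys w)"
  shows "staircase3 (block n) fst (block_col n) (mon_mset w)"
proof -
  have no_diag: "\<not> diagonal_pair m n r p q" and in_P: "p \<in> P" "q \<in> P"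
    if "p \<in># mon_mset w" "q \<in># mon_mset w" for p q
    using that assms unfolding diagonal_free_def mons_in_def by auto
  have "\<not> (block n p < block n q \<and> fst p < fst q)" "\<not> (block n p < block n q \<and> block_col n p < block_col n q)"
    "block n p = block n q \<Longrightarrow> \<not> (fst p < fst q \<and> block_col n p < block_col n q)"
    if "p \<in># mon_mset w" "q \<in># mon_mset w" for p q
  proof -
    have "1 \<le> snd p" "1 \<le> snd q"
      using in_P[OF that] unfolding vertex_set_def by auto
    then show "\<not> (block n p < block n q \<and> fst p < fst q)"
      "\<not> (block n p < block n q \<and> block_col n p < block_col n q)"
      "block n p = block n q \<Longrightarrow> \<not> (fst p < fst q \<and> block_col n p < block_col n q)"
      using no_diag[OF that] diagonal_pair_iff[OF m_pos n_pos in_P[OF that]]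
        snd_less_if_block_less[of p q n] n_pos by auto
  qed
  then show ?thesis
    unfolding staircase3_def staircase_def by auto
qed

lemma diagonal_free_unique:
  assumes "w \<in> mons_in P" "u \<in> mons_in P" "diagonal_free m n r (keys w)" "diagonal_free m n r (keys u)"
    and "multideg n w = multideg n u"
  shows "w = u"
proof (rule mon_mset_inject, rule staircase3_eq_by_marginals)
  show "staircase3 (block n) fst (block_col n) (mon_mset w)"
    "staircase3 (block n) fst (block_col n) (mon_mset u)"
    using diagonal_free_staircase3 assms(1-4) by blast+
  show "image_mset fst (mon_mset w) = image_mset fst (mon_mset u)"
    "image_mset (block_col n) (mon_mset w) = image_mset (block_col n) (mon_mset u)"
    "image_mset (block n) (mon_mset w) = image_mset (block n) (mon_mset u)"
    using assms(5) unfolding multideg_def by simp_all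
  fix z y
  assume "z \<in># mon_mset w" "y \<in># mon_mset u"
    and coords: "(block n z, fst z, block_col n z) = (block n y, fst y, block_col n y)"
  then have "1 \<le> snd z" "1 \<le> snd y"
    using assms(1,2) unfolding mons_in_def vertex_set_def by auto
  then have "snd z = snd y"
    using snd_eq_block[of z n] snd_eq_block[of y n] coords by simp
  then show "z = y"
    using coords by (simp add: prod_eq_iff)
qed

end

locale diagonal_term_order = grid +
  fixes tle :: "mon \<Rightarrow> mon \<Rightarrow> bool" and K :: "'k::field itself"
  assumes term_order: "term_order (vertex_set m n r) tle"
    and diagonal: "diagonal_order K m n r tle"
begin

lemma lead_mon_Hmat_minor:
  "(a, b, c, d) \<in> minor_idx m (n * r) \<Longrightarrow>
    lead_mon tle (minor2 (Hmat n) a b c d :: 'k mpoly) = vmon (Hmat n a c) + vmon (Hmat n b d)"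
  using diagonal unfolding diagonal_order_def by blast

lemma lead_mon_Vmat_minor:
  "(a, b, c, d) \<in> minor_idx (m * r) n \<Longrightarrow>
    lead_mon tle (minor2 (Vmat m n) a b c d :: 'k mpoly) = vmon (Vmat m n a c) + vmon (Vmat m n b d)"
  using diagonal unfolding diagonal_order_def by blast

lemma diagonal_pair_minor:
  assumes "diagonal_pair m n r p q"
  obtains g Y where "g \<in> (minors_HV m n r :: 'k mpoly set)"
    and "homogeneous_binomial n P g (vmon p + vmon q) Y" and "lead_mon tle g = vmon p + vmon q"
  using assms unfolding diagonal_pair_def
proof (elim disjE exE conjE)
  fix a b c d
  assume idx: "(a, b, c, d) \<in> minor_idx m (n * r)" and pq: "p = Hmat n a c" "q = Hmat n b d"
  show thesis
  proof (rule that)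
    show "minor2 (Hmat n) a b c d \<in> (minors_HV m n r :: 'k mpoly set)"
      unfolding minors_HV_def using idx by blast
    show "homogeneous_binomial n P (minor2 (Hmat n) a b c d :: 'k mpoly) (vmon p + vmon q)
        (vmon (Hmat n a d) + vmon (Hmat n b c))"
      unfolding pq by (rule Hmat_minor_homogeneous[OF idx])
    show "lead_mon tle (minor2 (Hmat n) a b c d :: 'k mpoly) = vmon p + vmon q"
      unfolding pq by (rule lead_mon_Hmat_minor[OF idx])
  qed
next
  fix a b c d
  assume idx: "(a, b, c, d) \<in> minor_idx (m * r) n" and pq: "p = Vmat m n a c" "q = Vmat m n b d"
  show thesis
  proof (rule that)
    show "minor2 (Vmat m n) a b c d \<in> (minors_HV m n r :: 'k mpoly set)"
      unfolding minors_HV_def using idx by blast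
    show "homogeneous_binomial n P (minor2 (Vmat m n) a b c d :: 'k mpoly) (vmon p + vmon q)
        (vmon (Vmat m n a d) + vmon (Vmat m n b c))"
      unfolding pq by (rule Vmat_minor_homogeneous[OF m_pos idx])
    show "lead_mon tle (minor2 (Vmat m n) a b c d :: 'k mpoly) = vmon p + vmon q"
      unfolding pq by (rule lead_mon_Vmat_minor[OF idx])
  qed
qed

text \<open>Replacing the diagonal \<open>x\<^sub>p x\<^sub>q\<close> of a minor in \<open>w\<close> by its antidiagonal lowers \<open>w\<close> inside
  its fiber.\<close>
lemma diagonal_pair_reducible:
  assumes w: "w \<in> mons_in P" and "\<not> diagonal_free m n r (keys w)"
  shows "\<exists>w'\<in>mons_in P. multideg n w' = multideg n w \<and> tle w' w \<and> w' \<noteq> w"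
proof -
  obtain p q where pq: "p \<in> keys w" "q \<in> keys w" "diagonal_pair m n r p q"
    using assms(2) unfolding diagonal_free_def by blast
  have "p \<noteq> q"
    using diagonal_pair_neq[OF m_pos n_pos _ _ pq(3)] pq(1,2) w unfolding mons_in_def by blast
  define X where "X = vmon p + vmon q"
  obtain g :: "'k mpoly" and Y where g: "homogeneous_binomial n P g X Y" "lead_mon tle g = X"
    using diagonal_pair_minor[OF pq(3)] unfolding X_def by metis
  have X: "g = single X 1 - single Y 1" "X \<noteq> Y" "multideg n X = multideg n Y"
    "X \<in> mons_in P" "Y \<in> mons_in P"
    using g(1) unfolding homogeneous_binomial_def by simp_all
  define c where "c = w - X"
  have "lookup X v \<le> lookup w v" for v
    using pq(1,2) \<open>p \<noteq> q\<close> unfolding X_def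
    by (auto simp: lookup_add lookup_single when_def in_keys_iff Suc_le_eq)
  then have wX: "w = X + c"
    unfolding c_def by (intro poly_mapping_eqI) (simp add: lookup_add lookup_minus)
  have c: "c \<in> mons_in P"
    using w unfolding c_def mons_in_def by (auto simp: in_keys_iff lookup_minus)
  have "g \<in> poly_ring P"
    using X by (simp add: poly_ring_diff poly_ring_single)
  then have "tle Y X"
    using lead_mon_greatest[OF term_order _ homogeneous_binomial_nonzero[OF g(1)]] g(2) X(1,2)
    by (simp add: keys_binomial)
  then have "tle (Y + c) w"
    using term_order_add_right[OF term_order X(5,4) c] wX by simp
  moreover have "multideg n (Y + c) = multideg n w"
    using multideg_add[OF X(3)[symmetric], of c] wX by (simp add: add.commute)
  moreover have "Y + c \<in> mons_in P" "Y + c \<noteq> w"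
    using mons_in_add[OF X(5) c] X(2) wX by simp_all
  ultimately show ?thesis
    by blast
qed

lemma lead_mon_not_diagonal_free:
  assumes "(f :: 'k mpoly) \<in> I_mnr m n r" "f \<noteq> 0"
  shows "\<not> diagonal_free m n r (keys (lead_mon tle f))"
proof (rule lead_mon_not_standard[where deg = "multideg n" and standard = "\<lambda>w. diagonal_free m n r (keys w)"])
  show "term_order P tle"
    by (fact term_order)
  show "f \<in> gen_ideal P (minors_HV m n r)" "f \<noteq> 0"
    using assms unfolding I_mnr_def by simp_all
  show "\<forall>g\<in>minors_HV m n r. \<exists>\<alpha> \<beta>. \<alpha> \<in> mons_in P \<and> \<beta> \<in> mons_in P \<and> multideg n \<alpha> = multideg n \<beta>
      \<and> g = single \<alpha> 1 - single \<beta> (1::'k)"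
    by (rule minors_HV_homogeneous[OF m_pos])
  show "finite {w \<in> mons_in P. multideg n w = multideg n u}" for u
    by (rule finite_multideg_fiber[OF finite_vertex_set])
  show "u = w" if "u \<in> mons_in P" "w \<in> mons_in P" "diagonal_free m n r (keys u)"
    "diagonal_free m n r (keys w)" "multideg n u = multideg n w" for u w
    using that by (rule diagonal_free_unique)
  show "\<exists>w'\<in>mons_in P. multideg n w' = multideg n w \<and> tle w' w \<and> w' \<noteq> w"
    if "w \<in> mons_in P" "\<not> diagonal_free m n r (keys w)" for w
    using that by (rule diagonal_pair_reducible)
  show "multideg n (c + a) = multideg n (c + a')" if "multideg n a = multideg n a'" for a a' c
    using that by (rule multideg_add)
qed

lemma face_diagonal_free:
  assumes \<Delta>: "simplicial_complex P \<Delta>"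
    and SR: "(SR_ideal P \<Delta> :: 'k mpoly set) = initial_ideal P tle (I_mnr m n r)"
    and F: "F \<in> \<Delta>"
  shows "diagonal_free m n r F"
  unfolding diagonal_free_def
proof (intro ballI notI)
  fix p q
  assume pq: "p \<in> F" "q \<in> F" "diagonal_pair m n r p q"
  have FP: "F \<subseteq> P"
    using \<Delta> F unfolding simplicial_complex_def by blast
  obtain g :: "'k mpoly" and Y where g: "g \<in> minors_HV m n r"
    "homogeneous_binomial n P g (vmon p + vmon q) Y" "lead_mon tle g = vmon p + vmon q"
    using diagonal_pair_minor[OF pq(3)] .
  have "g \<in> I_mnr m n r"
    unfolding I_mnr_def by (rule gen_ideal_generator[OF g(1)])
  then have "single (lead_mon tle g) (1::'k) \<in> initial_ideal P tle (I_mnr m n r)"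
    by (rule lead_mon_in_initial_ideal[OF _ homogeneous_binomial_nonzero[OF g(2)]])
  then have "single (vmon p + vmon q) (1::'k) \<in> initial_ideal P tle (I_mnr m n r)"
    unfolding g(3) .
  moreover have "p \<noteq> q"
    using diagonal_pair_neq[OF m_pos n_pos _ _ pq(3)] pq(1,2) FP by blast
  ultimately have "(sqfree_mon F :: 'k mpoly) \<in> initial_ideal P tle (I_mnr m n r)"
    unfolding initial_ideal_def
    using sqfree_mon_in_ideal_if_pair[OF finite_subset[OF FP finite_vertex_set] FP pq(1,2)] by blast
  then show False
    using sqfree_mon_in_SR_ideal_iff[OF \<Delta> finite_vertex_set FP] F SR by blast
qed

lemma diagonal_free_face:
  assumes \<Delta>: "simplicial_complex P \<Delta>"
    and SR: "(SR_ideal P \<Delta> :: 'k mpoly set) = initial_ideal P tle (I_mnr m n r)"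
    and F: "F \<subseteq> P" "diagonal_free m n r F"
  shows "F \<in> \<Delta>"
proof (rule ccontr)
  assume "F \<notin> \<Delta>"
  then have "(sqfree_mon F :: 'k mpoly) \<in> initial_ideal P tle (I_mnr m n r)"
    using sqfree_mon_in_SR_ideal_iff[OF \<Delta> finite_vertex_set F(1)] SR by blast
  then obtain f :: "'k mpoly" where f: "f \<in> I_mnr m n r" "f \<noteq> 0" "keys (lead_mon tle f) \<subseteq> F"
    using sqfree_mon_in_initial_ideal[OF finite_subset[OF F(1) finite_vertex_set]] by blast
  have "diagonal_free m n r (keys (lead_mon tle f))"
    using F(2) f(3) unfolding diagonal_free_def by blast
  then show False
    using lead_mon_not_diagonal_free[OF f(1,2)] by contradiction
qed

end

section \<open>Lattice paths\<close>

definition lattice_step :: "vtx \<Rightarrow> vtx \<Rightarrow> bool" where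
  "lattice_step p q \<longleftrightarrow> (fst q + 1 = fst p \<and> snd q = snd p) \<or> (fst q = fst p \<and> snd q = snd p + 1)"

fun lattice_path :: "vtx list \<Rightarrow> bool" where
  "lattice_path (p # q # ps) \<longleftrightarrow> lattice_step p q \<and> lattice_path (q # ps)"
| "lattice_path _ \<longleftrightarrow> True"

lemma lattice_path_iff_nth:
  "lattice_path ps \<longleftrightarrow> (\<forall>s. s + 1 < length ps \<longrightarrow> lattice_step (ps ! s) (ps ! (s + 1)))"
proof (induction ps rule: lattice_path.induct)
  case (1 p q ps)
  have "(\<forall>s. s + 1 < length (p # q # ps) \<longrightarrow> lattice_step ((p # q # ps) ! s) ((p # q # ps) ! (s + 1)))
    \<longleftrightarrow> lattice_step p q \<and>
      (\<forall>s. s + 1 < length (q # ps) \<longrightarrow> lattice_step ((q # ps) ! s) ((q # ps) ! (s + 1)))"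
  proof (intro iffI conjI allI impI)
    fix s
    assume "\<forall>s. s + 1 < length (p # q # ps) \<longrightarrow> lattice_step ((p # q # ps) ! s) ((p # q # ps) ! (s + 1))"
    then show "lattice_step p q" "s + 1 < length (q # ps) \<Longrightarrow> lattice_step ((q # ps) ! s) ((q # ps) ! (s + 1))"
      by (auto dest: spec[of _ 0] spec[of _ "Suc s"])
  next
    fix s
    assume "lattice_step p q \<and>
      (\<forall>s. s + 1 < length (q # ps) \<longrightarrow> lattice_step ((q # ps) ! s) ((q # ps) ! (s + 1)))"
      and "s + 1 < length (p # q # ps)"
    then show "lattice_step ((p # q # ps) ! s) ((p # q # ps) ! (s + 1))"
      by (cases s) auto
  qed
  then show ?case
    using "1.IH" by simp
qed simp_all

lemma is_path_iff:
  "is_path Q a b S \<longleftrightarrow> (\<exists>ps. lattice_path ps \<and> ps \<noteq> [] \<and> hd ps = a \<and> last ps = b \<and> set ps = S \<and> S \<subseteq> Q)"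
  unfolding is_path_def lattice_path_iff_nth lattice_step_def by auto

lemma lattice_path_box:
  "lattice_path ps \<Longrightarrow> ps \<noteq> [] \<Longrightarrow> set ps \<subseteq> {fst (last ps)..fst (hd ps)} \<times> {snd (hd ps)..snd (last ps)}"
proof (induction ps rule: lattice_path.induct)
  case (1 p q ps)
  then have "lattice_step p q" "set (q # ps) \<subseteq> {fst (last (q # ps))..fst q} \<times> {snd q..snd (last (q # ps))}"
    by simp_all
  then show ?case
    unfolding lattice_step_def by (fastforce simp: mem_Times_iff)
qed auto

definition no_strict_ascent :: "vtx set \<Rightarrow> bool" where
  "no_strict_ascent C \<longleftrightarrow> (\<forall>v\<in>C. \<forall>w\<in>C. \<not> (fst v < fst w \<and> snd v < snd w))"

lemma lattice_path_no_strict_ascent: "lattice_path ps \<Longrightarrow> no_strict_ascent (set ps)"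
proof (induction ps rule: lattice_path.induct)
  case (1 p q ps)
  have step: "fst q \<le> fst p" "snd p \<le> snd q"
    using "1.prems" by (auto simp: lattice_step_def)
  have "fst w \<le> fst p \<and> snd p \<le> snd w" if "w \<in> set (q # ps)" for w
    using lattice_path_box[of "q # ps"] "1.prems" that step by (auto simp: mem_Times_iff)
  then show ?case
    using "1.IH" "1.prems" unfolding no_strict_ascent_def by fastforce
qed (auto simp: no_strict_ascent_def)

lemma lattice_path_gap:
  assumes "lattice_path ps" "ps \<noteq> []" "hd ps = (a, c)" "last ps = (b, d)"
    and "b \<le> i" "i \<le> a" "c \<le> y" "y \<le> d" "(i, y) \<notin> set ps"
  shows "\<exists>w\<in>set ps. (fst w < i \<and> snd w < y) \<or> (i < fst w \<and> y < snd w)"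
  using assms
proof (induction ps arbitrary: a c rule: lattice_path.induct)
  case (1 p q ps)
  have p: "p = (a, c)" and step: "lattice_step p q"
    using "1.prems"(1,3) by simp_all
  show ?case
  proof (cases "i \<le> fst q \<and> snd q \<le> y")
    case True
    then have "\<exists>w\<in>set (q # ps). (fst w < i \<and> snd w < y) \<or> (i < fst w \<and> y < snd w)"
      using "1.IH"[of "fst q" "snd q"] "1.prems" by auto
    then show ?thesis
      by auto
  next
    case False
    then have "(fst q < i \<and> snd q < y) \<or> (i < fst q \<and> y < snd q)"
      using step p "1.prems"(6,7,9) unfolding lattice_step_def by auto
    then show ?thesis
      by auto
  qed
qed auto

text \<open>A path from \<open>(a, c)\<close> to \<open>(b, d)\<close> through all points of \<open>C\<close> can leave row \<open>a\<close> at once if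
  this row contains no point of \<open>C\<close> besides \<open>(a, c)\<close>; otherwise it moves to column \<open>c + 1\<close> first.\<close>
lemma no_strict_ascent_first_step:
  assumes C: "C \<subseteq> {b..a} \<times> {c..d}" "no_strict_ascent C"
    and "b \<le> a" "c \<le> d" "(a, c) \<noteq> (b, d)"
  obtains q where "lattice_step (a, c) q" "b \<le> fst q" "snd q \<le> d"
    "C - {(a, c)} \<subseteq> {b..fst q} \<times> {snd q..d}"
proof (cases "b < a \<and> (\<forall>v\<in>C. fst v = a \<longrightarrow> snd v \<le> c)")
  case True
  then have "C - {(a, c)} \<subseteq> {b..a - 1} \<times> {c..d}"
    using C(1) by (fastforce simp: mem_Times_iff prod_eq_iff)
  then show ?thesis
    using True assms(4) by (intro that[of "(a - 1, c)"]) (auto simp: lattice_step_def)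
next
  case False
  then consider "\<not> b < a" | v where "v \<in> C" "fst v = a" "c < snd v"
    by force
  then have "c < d \<and> (\<forall>w\<in>C. snd w = c \<longrightarrow> fst w = a)"
  proof cases
    case 1
    then show ?thesis
      using C(1) assms(3-5) by (fastforce simp: mem_Times_iff)
  next
    case 2
    then show ?thesis
      using C unfolding no_strict_ascent_def by (fastforce simp: mem_Times_iff)
  qed
  then have "c < d" "C - {(a, c)} \<subseteq> {b..a} \<times> {c + 1..d}"
    using C(1) by (fastforce simp: mem_Times_iff prod_eq_iff)+
  then show ?thesis
    using assms(3) by (intro that[of "(a, c + 1)"]) (auto simp: lattice_step_def)
qed

lemma lattice_path_through:
  assumes "C \<subseteq> {b..a} \<times> {c..d}" "no_strict_ascent C" "b \<le> a" "c \<le> d"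
  shows "\<exists>ps. lattice_path ps \<and> ps \<noteq> [] \<and> hd ps = (a, c) \<and> last ps = (b, d) \<and> C \<subseteq> set ps
    \<and> set ps \<subseteq> {b..a} \<times> {c..d}"
  using assms
proof (induction "(a - b) + (d - c)" arbitrary: a c C rule: less_induct)
  case less
  show ?case
  proof (cases "(a, c) = (b, d)")
    case True
    then show ?thesis
      using less.prems(1) by (intro exI[of _ "[(a, c)]"]) auto
  next
    case False
    obtain q where q: "lattice_step (a, c) q" "b \<le> fst q" "snd q \<le> d"
      "C - {(a, c)} \<subseteq> {b..fst q} \<times> {snd q..d}"
      using no_strict_ascent_first_step[OF less.prems False] .
    have "(fst q - b) + (d - snd q) < (a - b) + (d - c)"
      using q(1-3) unfolding lattice_step_def by auto
    moreover have "no_strict_ascent (C - {(a, c)})"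
      using less.prems(2) unfolding no_strict_ascent_def by blast
    ultimately obtain ps where ps: "lattice_path ps" "ps \<noteq> []" "hd ps = q" "last ps = (b, d)"
      "C - {(a, c)} \<subseteq> set ps" "set ps \<subseteq> {b..fst q} \<times> {snd q..d}"
      using less.hyps[OF _ q(4) _ q(2,3)] by auto
    have "lattice_path ((a, c) # ps)"
      using ps(1-3) q(1) by (cases ps) auto
    moreover have "set ps \<subseteq> {b..a} \<times> {c..d}"
      using ps(6) q(1) unfolding lattice_step_def by (auto simp: mem_Times_iff)
    ultimately show ?thesis
      using ps(2,4,5) less.prems(3,4) by (intro exI[of _ "(a, c) # ps"]) auto
  qed
qed

section \<open>Systems of paths\<close>

definition path_system ::
  "nat \<Rightarrow> nat \<Rightarrow> nat \<Rightarrow> (nat \<Rightarrow> nat) \<Rightarrow> (nat \<Rightarrow> nat) \<Rightarrow> (nat \<Rightarrow> vtx set) \<Rightarrow> bool" where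
  "path_system m n r g h S \<longleftrightarrow>
     g 0 = m \<and> g r = 1 \<and> (\<forall>k<r. g (Suc k) \<le> g k) \<and>
     h 0 = n \<and> h r = 1 \<and> (\<forall>k<r. h (Suc k) \<le> h k) \<and>
     (\<forall>k\<in>{1..r}. is_path (vertex_set m n r)
        (g (k - 1), (k - 1) * n + h k) (g k, (k - 1) * n + h (k - 1)) (S k))"

lemma antitone_upto:
  assumes "\<forall>k<r. g (Suc k) \<le> (g k :: nat)" "i \<le> j" "j \<le> r"
  shows "g j \<le> g i"
  using assms(2,3)
proof (induction j)
  case (Suc j)
  show ?case
  proof (cases "i = Suc j")
    case False
    then have "g j \<le> g i"
      using Suc by simp
    moreover have "g (Suc j) \<le> g j"
      using assms(1) Suc.prems(2) by simp
    ultimately show ?thesis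
      by simp
  qed simp
qed simp

context grid
begin

lemma vertex_set_bounds:
  assumes "v \<in> P"
  shows "1 \<le> fst v" "fst v \<le> m" "1 \<le> snd v" "block n v < r" "block_col n v + 1 \<le> n"
  using assms block_less[OF assms] block_col_less[OF n_pos, of v] unfolding vertex_set_def
  by (auto simp: Suc_le_eq)

lemma path_system_antitone:
  assumes "path_system m n r g h S" "i \<le> j" "j \<le> r"
  shows "g j \<le> g i" "h j \<le> h i"
  using antitone_upto[of r g i j] antitone_upto[of r h i j] assms unfolding path_system_def by simp_all

lemma path_system_bounds:
  assumes "path_system m n r g h S" "k \<le> r"
  shows "1 \<le> g k" "g k \<le> m" "1 \<le> h k" "h k \<le> n"
  using path_system_antitone[OF assms(1), of k r] path_system_antitone[OF assms(1), of 0 k] assms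
  unfolding path_system_def by simp_all

lemma path_system_path:
  assumes "path_system m n r g h S" "k \<in> {1..r}"
  obtains ps where "lattice_path ps" "ps \<noteq> []" "hd ps = (g (k - 1), (k - 1) * n + h k)"
    "last ps = (g k, (k - 1) * n + h (k - 1))" "set ps = S k" "S k \<subseteq> P"
  using assms unfolding path_system_def is_path_iff by blast

lemma path_system_ends:
  assumes "path_system m n r g h S" "k \<in> {1..r}"
  shows "(g (k - 1), (k - 1) * n + h k) \<in> S k" "(g k, (k - 1) * n + h (k - 1)) \<in> S k"
proof -
  obtain ps where "ps \<noteq> []" "hd ps = (g (k - 1), (k - 1) * n + h k)"
    "last ps = (g k, (k - 1) * n + h (k - 1))" "set ps = S k"
    using path_system_path[OF assms] by metis
  then show "(g (k - 1), (k - 1) * n + h k) \<in> S k" "(g k, (k - 1) * n + h (k - 1)) \<in> S k"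
    by (metis hd_in_set, metis last_in_set)
qed

lemma path_system_subset: "path_system m n r g h S \<Longrightarrow> (\<Union>k\<in>{1..r}. S k) \<subseteq> P"
  by (metis UN_least path_system_path)

lemma path_system_point:
  assumes "path_system m n r g h S" "k \<in> {1..r}" "v \<in> S k"
  shows "g k \<le> fst v" "fst v \<le> g (k - 1)" "block n v = k - 1"
    "h k \<le> block_col n v + 1" "block_col n v + 1 \<le> h (k - 1)"
proof -
  obtain ps where ps: "lattice_path ps" "ps \<noteq> []" "hd ps = (g (k - 1), (k - 1) * n + h k)"
    "last ps = (g k, (k - 1) * n + h (k - 1))" "set ps = S k"
    using path_system_path[OF assms(1,2)] by metis
  have box: "g k \<le> fst v" "fst v \<le> g (k - 1)" "(k - 1) * n + h k \<le> snd v" "snd v \<le> (k - 1) * n + h (k - 1)"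
    using lattice_path_box[OF ps(1,2)] ps(3-5) assms(3) by (auto simp: mem_Times_iff)
  have "1 \<le> h k" "h (k - 1) \<le> n"
    using path_system_bounds[OF assms(1)] assms(2) by auto
  define j where "j = snd v - (k - 1) * n"
  have j: "snd v = (k - 1) * n + j" "1 \<le> j" "j \<le> n" "h k \<le> j" "j \<le> h (k - 1)"
    using box \<open>1 \<le> h k\<close> \<open>h (k - 1) \<le> n\<close> unfolding j_def by auto
  then have "block n v = k - 1" "block_col n v = j - 1"
    using block_of_column[OF j(2,3), of "fst v" "k - 1"] by (metis prod.collapse)+
  then show "g k \<le> fst v" "fst v \<le> g (k - 1)" "block n v = k - 1"
    "h k \<le> block_col n v + 1" "block_col n v + 1 \<le> h (k - 1)"
    using box j by simp_all
qed

lemma path_system_diagonal_free: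
  assumes S: "path_system m n r g h S"
  shows "diagonal_free m n r (\<Union>k\<in>{1..r}. S k)"
  unfolding diagonal_free_def
proof (intro ballI)
  fix v w
  assume "v \<in> (\<Union>k\<in>{1..r}. S k)" "w \<in> (\<Union>k\<in>{1..r}. S k)"
  then obtain k k' where k: "k \<in> {1..r}" "v \<in> S k" and k': "k' \<in> {1..r}" "w \<in> S k'"
    by blast
  have in_P: "v \<in> P" "w \<in> P"
    using path_system_subset[OF S] k k' by blast+
  note v = path_system_point[OF S k] and w = path_system_point[OF S k']
  note diag = diagonal_pair_iff[OF m_pos n_pos in_P]
  have "1 \<le> snd v" "1 \<le> snd w"
    using in_P unfolding vertex_set_def by auto
  note snd_v = snd_eq_block[OF this(1), of n] and snd_w = snd_eq_block[OF this(2), of n]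
  show "\<not> diagonal_pair m n r v w"
  proof (cases k k' rule: linorder_cases)
    case equal
    then have "\<not> (fst v < fst w \<and> snd v < snd w)"
      using path_system_path[OF S k(1)] lattice_path_no_strict_ascent k(2) k'(2)
      unfolding no_strict_ascent_def by metis
    then show ?thesis
      using diag v w equal snd_v snd_w by auto
  next
    case less
    then have "g (k' - 1) \<le> g k" "h (k' - 1) \<le> h k"
      using path_system_antitone[OF S, of k "k' - 1"] k' by simp_all
    then show ?thesis
      using diag v w less k(1) by auto
  next
    case greater
    then have "block n w < block n v"
      using v(3) w(3) k'(1) by auto
    then have "snd w < snd v"
      using snd_v snd_w n_pos by (metis snd_less_if_block_less le_add2)
    then show ?thesis
      using diag \<open>block n w < block n v\<close> by auto
  qed
qed

end

context grid
begin

lemma path_system_above_box: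
  assumes S: "path_system m n r g h S" and v: "v \<in> P" and above: "g (block n v) < fst v"
  shows "\<exists>w\<in>(\<Union>k\<in>{1..r}. S k). diagonal_pair m n r w v"
proof -
  define b where "b = block n v"
  have "g 0 = m"
    using S unfolding path_system_def by simp
  have "b \<noteq> 0"
  proof
    assume "b = 0"
    then show False
      using above vertex_set_bounds(2)[OF v] \<open>g 0 = m\<close> unfolding b_def by simp
  qed
  then have "1 \<le> b"
    by simp
  then have b: "b \<in> {1..r}"
    using vertex_set_bounds(4)[OF v] unfolding b_def by simp
  define w where "w = (g b, (b - 1) * n + h (b - 1))"
  have "w \<in> S b"
    using path_system_ends(2)[OF S b] unfolding w_def by simp
  then have w: "w \<in> S b" "w \<in> P"
    using path_system_subset[OF S] b by blast+
  have "h (b - 1) \<le> n"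
    using path_system_bounds(4)[OF S, of "b - 1"] b by auto
  then have "snd w < snd v"
    using snd_eq_block[OF vertex_set_bounds(3)[OF v], of n] \<open>1 \<le> b\<close> unfolding w_def b_def
    by (cases "block n v") (auto simp: algebra_simps)
  then have "diagonal_pair m n r w v"
    using above diagonal_pair_iff[OF m_pos n_pos w(2) v] unfolding w_def b_def by simp
  then show ?thesis
    using w(1) b by blast
qed

lemma path_system_below_box:
  assumes S: "path_system m n r g h S" and v: "v \<in> P" and below: "fst v < g (block n v + 1)"
  shows "\<exists>w\<in>(\<Union>k\<in>{1..r}. S k). diagonal_pair m n r v w"
proof -
  define b where "b = block n v"
  have "g r = 1"
    using S unfolding path_system_def by simp
  then have "b + 1 \<noteq> r"
    using below vertex_set_bounds(1)[OF v] unfolding b_def by auto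
  then have "b + 1 < r"
    using vertex_set_bounds(4)[OF v] unfolding b_def by simp
  then have b: "b + 2 \<in> {1..r}"
    by simp
  define w where "w = (g (b + 1), (b + 1) * n + h (b + 2))"
  have "w \<in> S (b + 2)"
    using path_system_ends(1)[OF S b] unfolding w_def by simp
  then have w: "w \<in> S (b + 2)" "w \<in> P"
    using path_system_subset[OF S] b by blast+
  have "1 \<le> h (b + 2)"
    using path_system_bounds(3)[OF S, of "b + 2"] b by simp
  moreover have "snd v \<le> (b + 1) * n"
    using snd_eq_block[OF vertex_set_bounds(3)[OF v], of n] block_col_less[OF n_pos, of v]
    unfolding b_def by simp
  ultimately have "snd v < snd w"
    unfolding w_def by simp
  then have "diagonal_pair m n r v w"
    using below diagonal_pair_iff[OF m_pos n_pos v w(2)] unfolding w_def b_def by simp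
  then show ?thesis
    using w(1) b by blast
qed

lemma path_system_right_of_box:
  assumes S: "path_system m n r g h S" and v: "v \<in> P" and right: "h (block n v) < block_col n v + 1"
  shows "\<exists>w\<in>(\<Union>k\<in>{1..r}. S k). diagonal_pair m n r w v"
proof -
  define b where "b = block n v"
  have "h 0 = n"
    using S unfolding path_system_def by simp
  have "b \<noteq> 0"
  proof
    assume "b = 0"
    then show False
      using right block_col_less[OF n_pos, of v] \<open>h 0 = n\<close> unfolding b_def by simp
  qed
  then have "1 \<le> b"
    by simp
  then have b: "b \<in> {1..r}"
    using vertex_set_bounds(4)[OF v] unfolding b_def by simp
  define w where "w = (g (b - 1), (b - 1) * n + h b)"
  have "w \<in> S b"
    using path_system_ends(1)[OF S b] unfolding w_def by simp
  then have w: "w \<in> S b" "w \<in> P"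
    using path_system_subset[OF S] b by blast+
  have hb: "1 \<le> h b" "h b \<le> n"
    using path_system_bounds[OF S, of b] b by simp_all
  have "block n w = b - 1" "block_col n w = h b - 1"
    using block_of_column[OF hb, of "g (b - 1)" "b - 1"] unfolding w_def by simp_all
  then have "block n w < block n v" "block_col n w < block_col n v"
    using right \<open>1 \<le> b\<close> hb unfolding b_def by simp_all
  then have "diagonal_pair m n r w v"
    using diagonal_pair_iff[OF m_pos n_pos w(2) v] by simp
  then show ?thesis
    using w(1) b by blast
qed

lemma path_system_left_of_box:
  assumes S: "path_system m n r g h S" and v: "v \<in> P" and left: "block_col n v + 1 < h (block n v + 1)"
  shows "\<exists>w\<in>(\<Union>k\<in>{1..r}. S k). diagonal_pair m n r v w"
proof -
  define b where "b = block n v"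
  have "h r = 1"
    using S unfolding path_system_def by simp
  then have "b + 1 \<noteq> r"
    using left unfolding b_def by auto
  then have "b + 1 < r"
    using vertex_set_bounds(4)[OF v] unfolding b_def by simp
  then have b: "b + 2 \<in> {1..r}"
    by simp
  define w where "w = (g (b + 2), (b + 1) * n + h (b + 1))"
  have "w \<in> S (b + 2)"
    using path_system_ends(2)[OF S b] unfolding w_def by simp
  then have w: "w \<in> S (b + 2)" "w \<in> P"
    using path_system_subset[OF S] b by blast+
  have hb: "1 \<le> h (b + 1)" "h (b + 1) \<le> n"
    using path_system_bounds[OF S, of "b + 1"] \<open>b + 1 < r\<close> by simp_all
  have "block n w = b + 1" "block_col n w = h (b + 1) - 1"
    using block_of_column[OF hb, of "g (b + 2)" "b + 1"] unfolding w_def by simp_all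
  then have "block n v < block n w" "block_col n v < block_col n w"
    using left unfolding b_def by simp_all
  then have "diagonal_pair m n r v w"
    using diagonal_pair_iff[OF m_pos n_pos v w(2)] by simp
  then show ?thesis
    using w(1) b by blast
qed

lemma path_system_inside_box:
  assumes S: "path_system m n r g h S" and v: "v \<in> P" "v \<notin> (\<Union>k\<in>{1..r}. S k)"
    and box: "g (block n v + 1) \<le> fst v" "fst v \<le> g (block n v)"
      "h (block n v + 1) \<le> block_col n v + 1" "block_col n v + 1 \<le> h (block n v)"
  shows "\<exists>w\<in>(\<Union>k\<in>{1..r}. S k). diagonal_pair m n r v w \<or> diagonal_pair m n r w v"
proof -
  define b where "b = block n v"
  have b: "b + 1 \<in> {1..r}"
    using block_less[OF v(1)] unfolding b_def by simp
  obtain ps where ps: "lattice_path ps" "ps \<noteq> []" "hd ps = (g b, b * n + h (b + 1))"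
    "last ps = (g (b + 1), b * n + h b)" "set ps = S (b + 1)" "S (b + 1) \<subseteq> P"
    using path_system_path[OF S b, unfolded add_diff_cancel_right'] .
  have snd_v: "snd v = b * n + block_col n v + 1"
    using snd_eq_block[OF vertex_set_bounds(3)[OF v(1)]] unfolding b_def .
  have "(fst v, snd v) \<notin> set ps"
    using v(2) b ps(5) by auto
  moreover have "g (b + 1) \<le> fst v" "fst v \<le> g b"
    "b * n + h (b + 1) \<le> snd v" "snd v \<le> b * n + h b"
    using box snd_v unfolding b_def by simp_all
  ultimately obtain w where w: "w \<in> set ps"
    "fst w < fst v \<and> snd w < snd v \<or> fst v < fst w \<and> snd v < snd w"
    using lattice_path_gap[OF ps(1-4)] by blast
  have "w \<in> P"
    using w(1) ps(5) path_system_subset[OF S] b by blast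
  then have "diagonal_pair m n r v w \<or> diagonal_pair m n r w v"
    using w(2) diagonal_pair_iff[OF m_pos n_pos v(1)] diagonal_pair_iff[OF m_pos n_pos _ v(1)] by blast
  then show ?thesis
    using w(1) ps(5) b by blast
qed

lemma path_system_maximal:
  assumes "path_system m n r g h S" "v \<in> P" "v \<notin> (\<Union>k\<in>{1..r}. S k)"
  shows "\<exists>w\<in>(\<Union>k\<in>{1..r}. S k). diagonal_pair m n r v w \<or> diagonal_pair m n r w v"
proof -
  consider "g (block n v) < fst v" | "fst v < g (block n v + 1)"
    | "h (block n v) < block_col n v + 1" | "block_col n v + 1 < h (block n v + 1)"
    | "g (block n v + 1) \<le> fst v" "fst v \<le> g (block n v)"
      "h (block n v + 1) \<le> block_col n v + 1" "block_col n v + 1 \<le> h (block n v)"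
    by linarith
  then show ?thesis
  proof cases
    case 1
    then show ?thesis using path_system_above_box[OF assms(1,2)] by blast
  next
    case 2
    then show ?thesis using path_system_below_box[OF assms(1,2)] by blast
  next
    case 3
    then show ?thesis using path_system_right_of_box[OF assms(1,2)] by blast
  next
    case 4
    then show ?thesis using path_system_left_of_box[OF assms(1,2)] by blast
  next
    case 5
    then show ?thesis by (rule path_system_inside_box[OF assms])
  qed
qed

end

text \<open>The witnesses for a diagonal-free set \<open>F\<close>: \<open>g k\<close> is the least row, and \<open>h k\<close> the least
  column (counted from 1 inside its block), of the points of \<open>F\<close> in the blocks before \<open>k\<close>,
  capped by \<open>m\<close> and \<open>n\<close> respectively, and both are set to 1 at \<open>k = r\<close>.\<close>
definition lower_envelope ::
  "nat \<Rightarrow> (vtx \<Rightarrow> nat) \<Rightarrow> (vtx \<Rightarrow> nat) \<Rightarrow> nat \<Rightarrow> vtx set \<Rightarrow> nat \<Rightarrow> nat" where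
  "lower_envelope r blk f cap F k = (if r \<le> k then 1 else Min (insert cap (f ` {p \<in> F. blk p < k})))"

context
  fixes r :: nat and blk f :: "vtx \<Rightarrow> nat" and cap :: nat and F :: "vtx set"
  assumes finite: "finite F" and cap_pos: "1 \<le> cap" and f_pos: "\<forall>p\<in>F. 1 \<le> f p"
begin

lemma lower_envelope_bounds: "1 \<le> lower_envelope r blk f cap F k" "lower_envelope r blk f cap F k \<le> cap"
proof -
  have "Min (insert cap (f ` {p \<in> F. blk p < k})) \<in> insert cap (f ` {p \<in> F. blk p < k})"
    using finite by (intro Min_in) auto
  then show "1 \<le> lower_envelope r blk f cap F k"
    using cap_pos f_pos unfolding lower_envelope_def by auto
  show "lower_envelope r blk f cap F k \<le> cap"
    using finite cap_pos unfolding lower_envelope_def by simp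
qed

lemma lower_envelope_Suc_le: "lower_envelope r blk f cap F (Suc k) \<le> lower_envelope r blk f cap F k"
proof (cases "r \<le> Suc k")
  case True
  then show ?thesis
    using lower_envelope_bounds(1)[of k] unfolding lower_envelope_def by simp
next
  case False
  have "Min (insert cap (f ` {p \<in> F. blk p < Suc k})) \<le> Min (insert cap (f ` {p \<in> F. blk p < k}))"
    using finite by (intro Min_antimono) auto
  then show ?thesis
    using False unfolding lower_envelope_def by simp
qed

lemma lower_envelope_le: "p \<in> F \<Longrightarrow> lower_envelope r blk f cap F (blk p + 1) \<le> f p"
  using finite f_pos unfolding lower_envelope_def by auto

lemma le_lower_envelope:
  assumes "p \<in> F" "f p \<le> cap" "\<forall>q\<in>F. blk q < blk p \<longrightarrow> f p \<le> f q" "blk p < r"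
  shows "f p \<le> lower_envelope r blk f cap F (blk p)"
  using assms finite unfolding lower_envelope_def by auto

end

context grid
begin

lemma diagonal_free_earlier_block:
  assumes "F \<subseteq> P" "diagonal_free m n r F" "p \<in> F" "q \<in> F" "block n q < block n p"
  shows "fst p \<le> fst q" "block_col n p \<le> block_col n q"
proof -
  have in_P: "q \<in> P" "p \<in> P"
    using assms(1,3,4) by auto
  then have "snd q < snd p"
    using snd_less_if_block_less[OF _ _ assms(5) n_pos] unfolding vertex_set_def by auto
  moreover have "\<not> diagonal_pair m n r q p"
    using assms(2-4) unfolding diagonal_free_def by blast
  ultimately show "fst p \<le> fst q" "block_col n p \<le> block_col n q"
    using diagonal_pair_iff[OF m_pos n_pos in_P] assms(5) by auto
qed

lemma path_through_block:
  assumes k: "k \<in> {1..r}" and g: "1 \<le> g k" "g k \<le> g (k - 1)" "g (k - 1) \<le> m"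
    and h: "1 \<le> h k" "h k \<le> h (k - 1)" "h (k - 1) \<le> n"
    and C: "C \<subseteq> {g k..g (k - 1)} \<times> {(k - 1) * n + h k..(k - 1) * n + h (k - 1)}" "no_strict_ascent C"
  shows "\<exists>T. is_path P (g (k - 1), (k - 1) * n + h k) (g k, (k - 1) * n + h (k - 1)) T \<and> C \<subseteq> T"
proof -
  obtain ps where ps: "lattice_path ps" "ps \<noteq> []" "hd ps = (g (k - 1), (k - 1) * n + h k)"
    "last ps = (g k, (k - 1) * n + h (k - 1))" "C \<subseteq> set ps"
    "set ps \<subseteq> {g k..g (k - 1)} \<times> {(k - 1) * n + h k..(k - 1) * n + h (k - 1)}"
    using lattice_path_through[OF C] g(2) h(2) by auto
  have "(k - 1) * n + h (k - 1) \<le> n * r"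
  proof -
    have "(k - 1) * n + h (k - 1) \<le> (k - 1) * n + n"
      using h(3) by simp
    also have "\<dots> = k * n"
      using k by (cases k) auto
    also have "\<dots> \<le> n * r"
      using k by simp
    finally show ?thesis .
  qed
  then have "set ps \<subseteq> P"
    using ps(6) g(1,3) h(1) unfolding vertex_set_def by (auto simp: mem_Times_iff)
  then show ?thesis
    using ps unfolding is_path_iff by blast
qed

context
  fixes F :: "vtx set"
  assumes FP: "F \<subseteq> P" and F: "diagonal_free m n r F"
begin

definition row_envelope :: "nat \<Rightarrow> nat" where
  "row_envelope = lower_envelope r (block n) fst m F"

definition col_envelope :: "nat \<Rightarrow> nat" where
  "col_envelope = lower_envelope r (block n) (\<lambda>p. block_col n p + 1) n F"

lemma finite_F: "finite F"
  using finite_subset[OF FP finite_vertex_set] .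

lemma envelope_pos: "\<forall>p\<in>F. 1 \<le> fst p" "\<forall>p\<in>F. 1 \<le> block_col n p + 1"
  using FP vertex_set_bounds(1) by auto

lemma envelope_bounds:
  "1 \<le> row_envelope k" "row_envelope k \<le> m" "row_envelope (Suc k) \<le> row_envelope k"
  "1 \<le> col_envelope k" "col_envelope k \<le> n" "col_envelope (Suc k) \<le> col_envelope k"
  unfolding row_envelope_def col_envelope_def
  using lower_envelope_bounds[OF finite_F m_pos envelope_pos(1)]
    lower_envelope_Suc_le[OF finite_F m_pos envelope_pos(1)]
    lower_envelope_bounds[OF finite_F n_pos envelope_pos(2)]
    lower_envelope_Suc_le[OF finite_F n_pos envelope_pos(2)]
  by blast+

lemma envelope_ends: "row_envelope 0 = m" "row_envelope r = 1" "col_envelope 0 = n" "col_envelope r = 1"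
  unfolding row_envelope_def col_envelope_def lower_envelope_def using r_pos by simp_all

lemma envelope_box:
  assumes "p \<in> F"
  shows "row_envelope (block n p + 1) \<le> fst p" "fst p \<le> row_envelope (block n p)"
    "col_envelope (block n p + 1) \<le> block_col n p + 1" "block_col n p + 1 \<le> col_envelope (block n p)"
proof -
  have p: "fst p \<le> m" "block n p < r" "block_col n p + 1 \<le> n"
    using vertex_set_bounds FP assms by blast+
  note earlier = diagonal_free_earlier_block[OF FP F assms]
  have row_earlier: "\<forall>q\<in>F. block n q < block n p \<longrightarrow> fst p \<le> fst q"
    and col_earlier: "\<forall>q\<in>F. block n q < block n p \<longrightarrow> block_col n p + 1 \<le> block_col n q + 1"
    using earlier by auto
  show "row_envelope (block n p + 1) \<le> fst p" "fst p \<le> row_envelope (block n p)"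
    unfolding row_envelope_def
    using lower_envelope_le[OF finite_F m_pos envelope_pos(1) assms]
      le_lower_envelope[OF finite_F m_pos envelope_pos(1) assms p(1) row_earlier p(2)] by simp_all
  show "col_envelope (block n p + 1) \<le> block_col n p + 1" "block_col n p + 1 \<le> col_envelope (block n p)"
    unfolding col_envelope_def
    using lower_envelope_le[OF finite_F n_pos envelope_pos(2) assms]
      le_lower_envelope[OF finite_F n_pos envelope_pos(2) assms p(3) col_earlier p(2)] by simp_all
qed

lemma block_in_envelope_path:
  assumes k: "k \<in> {1..r}"
  shows "\<exists>T. is_path P (row_envelope (k - 1), (k - 1) * n + col_envelope k)
    (row_envelope k, (k - 1) * n + col_envelope (k - 1)) T \<and> {p \<in> F. block n p = k - 1} \<subseteq> T"
proof (rule path_through_block[OF k])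
  have "Suc (k - 1) = k"
    using k by simp
  then show "row_envelope k \<le> row_envelope (k - 1)" "col_envelope k \<le> col_envelope (k - 1)"
    using envelope_bounds(3,6)[of "k - 1"] by simp_all
  show "{p \<in> F. block n p = k - 1} \<subseteq> {row_envelope k..row_envelope (k - 1)}
    \<times> {(k - 1) * n + col_envelope k..(k - 1) * n + col_envelope (k - 1)}"
  proof
    fix p
    assume "p \<in> {p \<in> F. block n p = k - 1}"
    then have p: "p \<in> F" "block n p + 1 = k" "block n p = k - 1"
      using k by auto
    have "p \<in> P"
      using FP p(1) by blast
    then have "snd p = (k - 1) * n + (block_col n p + 1)"
      using snd_eq_block[OF vertex_set_bounds(3), of p n] p(3) by simp
    then show "p \<in> {row_envelope k..row_envelope (k - 1)}
      \<times> {(k - 1) * n + col_envelope k..(k - 1) * n + col_envelope (k - 1)}"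
      using envelope_box[OF p(1), unfolded p(2), unfolded p(3)] by (simp add: mem_Times_iff)
  qed
  show "no_strict_ascent {p \<in> F. block n p = k - 1}"
    unfolding no_strict_ascent_def
  proof (intro ballI)
    fix v w
    assume "v \<in> {p \<in> F. block n p = k - 1}" "w \<in> {p \<in> F. block n p = k - 1}"
    then have "v \<in> P" "w \<in> P" "\<not> diagonal_pair m n r v w"
      using FP F unfolding diagonal_free_def by auto
    then show "\<not> (fst v < fst w \<and> snd v < snd w)"
      using diagonal_pair_iff[OF m_pos n_pos] by blast
  qed
qed (use envelope_bounds in auto)

lemma diagonal_free_in_path_system:
  "\<exists>g h S. path_system m n r g h S \<and> F \<subseteq> (\<Union>k\<in>{1..r}. S k)"
proof -
  let ?path = "\<lambda>k T. is_path P (row_envelope (k - 1), (k - 1) * n + col_envelope k)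
    (row_envelope k, (k - 1) * n + col_envelope (k - 1)) T \<and> {p \<in> F. block n p = k - 1} \<subseteq> T"
  have "\<forall>k\<in>{1..r}. \<exists>T. ?path k T"
    using block_in_envelope_path by blast
  then obtain S where S: "\<forall>k\<in>{1..r}. ?path k (S k)"
    using bchoice[of "{1..r}" ?path] by blast
  have "path_system m n r row_envelope col_envelope S"
    unfolding path_system_def
  proof (intro conjI allI impI)
    show "\<forall>k\<in>{1..r}. is_path P (row_envelope (k - 1), (k - 1) * n + col_envelope k)
      (row_envelope k, (k - 1) * n + col_envelope (k - 1)) (S k)"
      using S by blast
  qed (simp_all add: envelope_ends envelope_bounds)
  moreover have "F \<subseteq> (\<Union>k\<in>{1..r}. S k)"
  proof
    fix p
    assume "p \<in> F"
    moreover have "block n p < r"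
      using \<open>p \<in> F\<close> FP vertex_set_bounds(4) by blast
    ultimately have "block n p + 1 \<in> {1..r}" "p \<in> {q \<in> F. block n q = block n p + 1 - 1}"
      by auto
    then show "p \<in> (\<Union>k\<in>{1..r}. S k)"
      using S by blast
  qed
  ultimately show ?thesis
    by blast
qed

end

theorem facet_diagonal_free_iff:
  "facet {F. F \<subseteq> P \<and> diagonal_free m n r F} F \<longleftrightarrow>
     (\<exists>g h S. path_system m n r g h S \<and> F = (\<Union>k\<in>{1..r}. S k))"
proof
  assume "facet {F. F \<subseteq> P \<and> diagonal_free m n r F} F"
  then have F: "F \<subseteq> P" "diagonal_free m n r F"
    and maximal: "\<And>G. G \<subseteq> P \<Longrightarrow> diagonal_free m n r G \<Longrightarrow> F \<subseteq> G \<Longrightarrow> G = F"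
    unfolding facet_def by auto
  obtain g h S where S: "path_system m n r g h S" "F \<subseteq> (\<Union>k\<in>{1..r}. S k)"
    using diagonal_free_in_path_system[OF F] by blast
  then have "(\<Union>k\<in>{1..r}. S k) = F"
    using maximal[OF path_system_subset[OF S(1)] path_system_diagonal_free[OF S(1)]] by blast
  then show "\<exists>g h S. path_system m n r g h S \<and> F = (\<Union>k\<in>{1..r}. S k)"
    using S(1) by metis
next
  assume "\<exists>g h S. path_system m n r g h S \<and> F = (\<Union>k\<in>{1..r}. S k)"
  then obtain g h S where S: "path_system m n r g h S" and F: "F = (\<Union>k\<in>{1..r}. S k)"
    by blast
  have "G = F" if G: "G \<subseteq> P" "diagonal_free m n r G" "F \<subseteq> G" for G
  proof (rule ccontr)
    assume "G \<noteq> F"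
    then obtain v where v: "v \<in> G" "v \<notin> F"
      using G(3) by blast
    then have "v \<in> P"
      using G(1) by blast
    then obtain w where "w \<in> F" "diagonal_pair m n r v w \<or> diagonal_pair m n r w v"
      using path_system_maximal[OF S _ v(2)[unfolded F]] unfolding F by blast
    then show False
      using G(2,3) \<open>v \<in> G\<close> unfolding diagonal_free_def by blast
  qed
  moreover have "F \<in> {F. F \<subseteq> P \<and> diagonal_free m n r F}"
    using path_system_subset[OF S] path_system_diagonal_free[OF S] unfolding F by simp
  ultimately show "facet {F. F \<subseteq> P \<and> diagonal_free m n r F} F"
    unfolding facet_def by blast
qed

end

theorem theorem5p4:
  fixes m n r :: nat
    and tle :: "mon \<Rightarrow> mon \<Rightarrow> bool"
    and \<Delta> :: "vtx set set"
    and F :: "vtx set"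
  assumes "1 \<le> m" and "1 \<le> n" and "1 \<le> r"
    and "term_order (vertex_set m n r) tle"
    and "diagonal_order TYPE('k::field) m n r tle"
    and "simplicial_complex (vertex_set m n r) \<Delta>"
    and "(SR_ideal (vertex_set m n r) \<Delta> :: 'k mpoly set)
           = initial_ideal (vertex_set m n r) tle (I_mnr m n r)"
  shows "facet \<Delta> F \<longleftrightarrow>
    (\<exists>g h :: nat \<Rightarrow> nat.
       g 0 = m \<and> g r = 1 \<and> (\<forall>k<r. g (Suc k) \<le> g k) \<and>
       h 0 = n \<and> h r = 1 \<and> (\<forall>k<r. h (Suc k) \<le> h k) \<and>
       (\<exists>S :: nat \<Rightarrow> vtx set.
          (\<forall>k\<in>{1..r}. is_path (vertex_set m n r)
             (g (k - 1), (k - 1) * n + h k) (g k, (k - 1) * n + h (k - 1)) (S k)) \<and>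
          F = (\<Union>k\<in>{1..r}. S k)))"
proof -
  interpret diagonal_term_order m n r tle "TYPE('k)"
    using assms(1-5) by unfold_locales
  have "\<Delta> = {F. F \<subseteq> vertex_set m n r \<and> diagonal_free m n r F}"
    using face_diagonal_free[OF assms(6,7)] diagonal_free_face[OF assms(6,7)] assms(6)
    unfolding simplicial_complex_def by blast
  then have "facet \<Delta> F \<longleftrightarrow> (\<exists>g h S. path_system m n r g h S \<and> F = (\<Union>k\<in>{1..r}. S k))"
    using facet_diagonal_free_iff by simp
  then show ?thesis
    unfolding path_system_def by blast
qed

end
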